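(* Let $\Gamma$ be an antipodal tight graph $\mathrm{AT}4(p,q,2)$ with vertex set $X$, and let $x\in X$. If $W$ is an irreducible $T(x)$-module with endpoint $2$, then $W$ has diameter $0$ and is thin.
   Context: For integers $p\ge 1$, $q\ge 2$, an $\mathrm{AT}4(p,q,2)$ is a non-bipartite distance-regular antipodal double cover of diameter $4$ with intersection array $\{q(pq+p+q),\,(q^2-1)(p+1),\,q(p+q)/2,\,1;\ 1,\,q(p+q)/2,\,(q^2-1)(p+1),\,q(pq+p+q)\}$; such a graph is tight and $Q$-polynomial. Let $A$ be the adjacency matrix, $\partial$ the distance, $V=\mathbb{C}^X$, and for $0\le i\le 4$ let $E^*_i(x)$ be the diagonal matrix with $(E^*_i(x))_{yy}=1$ if $\partial(x,y)=i$ and $0$ otherwise. $T(x)$ is the subalgebra of $\mathrm{Mat}_X(\mathbb{C})$ generated by $A,E^*_0(x),\dots,E^*_4(x)$. For an irreducible $T(x)$-module $W$ (a nonzero $T(x)$-invariant subspace of $V$ with no invariant subspaces other than $0,W$), its endpoint is $\min\{i:E^*_i(x)W\neq0\}$, its diameter is $|\{i:E^*_i(x)W\ne 0\}|-1$, and $W$ is thin if $\dim E^*_i(x)W\le1$ for all $i$. *)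

theory Defs
  imports Complex_Main
begin

definition simple_graph :: "'a set \<Rightarrow> ('a \<Rightarrow> 'a \<Rightarrow> bool) \<Rightarrow> bool" where
  "simple_graph X Adj \<longleftrightarrow> finite X \<and> X \<noteq> {} \<and>
     (\<forall>y z. Adj y z \<longrightarrow> y \<in> X \<and> z \<in> X) \<and>
     (\<forall>y z. Adj y z \<longrightarrow> Adj z y) \<and> (\<forall>y. \<not> Adj y y)"

inductive walk :: "'a set \<Rightarrow> ('a \<Rightarrow> 'a \<Rightarrow> bool) \<Rightarrow> nat \<Rightarrow> 'a \<Rightarrow> 'a \<Rightarrow> bool"
  for X Adj where
  walk0: "x \<in> X \<Longrightarrow> walk X Adj 0 x x"
| walkS: "walk X Adj n x y \<Longrightarrow> Adj y z \<Longrightarrow> z \<in> X \<Longrightarrow> walk X Adj (Suc n) x z"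

definition gdist :: "'a set \<Rightarrow> ('a \<Rightarrow> 'a \<Rightarrow> bool) \<Rightarrow> 'a \<Rightarrow> 'a \<Rightarrow> nat" where
  "gdist X Adj x y = (LEAST n. walk X Adj n x y)"

definition connected_graph :: "'a set \<Rightarrow> ('a \<Rightarrow> 'a \<Rightarrow> bool) \<Rightarrow> bool" where
  "connected_graph X Adj \<longleftrightarrow> (\<forall>x\<in>X. \<forall>y\<in>X. \<exists>n. walk X Adj n x y)"

definition graph_diameter :: "'a set \<Rightarrow> ('a \<Rightarrow> 'a \<Rightarrow> bool) \<Rightarrow> nat \<Rightarrow> bool" where
  "graph_diameter X Adj D \<longleftrightarrow> (\<forall>x\<in>X. \<forall>y\<in>X. gdist X Adj x y \<le> D) \<and>
     (\<exists>x\<in>X. \<exists>y\<in>X. gdist X Adj x y = D)"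

definition distance_regular ::
  "'a set \<Rightarrow> ('a \<Rightarrow> 'a \<Rightarrow> bool) \<Rightarrow> nat \<Rightarrow> (nat \<Rightarrow> nat) \<Rightarrow> (nat \<Rightarrow> nat) \<Rightarrow> bool" where
  "distance_regular X Adj D b c \<longleftrightarrow>
     simple_graph X Adj \<and> connected_graph X Adj \<and> graph_diameter X Adj D \<and>
     (\<forall>x\<in>X. \<forall>y\<in>X.
        (1 \<le> gdist X Adj x y \<longrightarrow>
           card {z\<in>X. Adj y z \<and> gdist X Adj x z = gdist X Adj x y - 1} = c (gdist X Adj x y)) \<and>
        (gdist X Adj x y < D \<longrightarrow>
           card {z\<in>X. Adj y z \<and> gdist X Adj x z = gdist X Adj x y + 1} = b (gdist X Adj x y)))"

definition bipartite :: "'a set \<Rightarrow> ('a \<Rightarrow> 'a \<Rightarrow> bool) \<Rightarrow> bool" where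
  "bipartite X Adj \<longleftrightarrow> (\<exists>S. \<forall>y\<in>X. \<forall>z\<in>X. Adj y z \<longrightarrow> (y \<in> S \<longleftrightarrow> z \<notin> S))"

text \<open>Antipodal: being at distance D (the diameter) or equal is an equivalence
relation. Double cover: every antipodal class has size 2.\<close>

definition antipodal :: "'a set \<Rightarrow> ('a \<Rightarrow> 'a \<Rightarrow> bool) \<Rightarrow> nat \<Rightarrow> bool" where
  "antipodal X Adj D \<longleftrightarrow> (\<forall>x\<in>X. \<forall>y\<in>X. \<forall>z\<in>X.
      gdist X Adj x y = D \<and> gdist X Adj x z = D \<and> y \<noteq> z \<longrightarrow> gdist X Adj y z = D)"

definition antipodal_double_cover :: "'a set \<Rightarrow> ('a \<Rightarrow> 'a \<Rightarrow> bool) \<Rightarrow> nat \<Rightarrow> bool" where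
  "antipodal_double_cover X Adj D \<longleftrightarrow> antipodal X Adj D \<and>
     (\<forall>x\<in>X. card {y\<in>X. gdist X Adj x y = D} = 1)"

text \<open>AT4(p,q,2): intersection array
 {q(pq+p+q), (q^2-1)(p+1), q(p+q)/2, 1; 1, q(p+q)/2, (q^2-1)(p+1), q(pq+p+q)}.
The entries q(p+q)/2 are encoded as 2 * b_2 = q(p+q), 2 * c_2 = q(p+q).\<close>

definition AT4 :: "'a set \<Rightarrow> ('a \<Rightarrow> 'a \<Rightarrow> bool) \<Rightarrow> nat \<Rightarrow> nat \<Rightarrow> bool" where
  "AT4 X Adj p q \<longleftrightarrow> 1 \<le> p \<and> 2 \<le> q \<and> \<not> bipartite X Adj \<and> antipodal_double_cover X Adj 4 \<and>
     (\<exists>b c. distance_regular X Adj 4 b c \<and>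
        b 0 = q * (p*q + p + q) \<and> b 1 = (q^2 - 1) * (p + 1) \<and> 2 * b 2 = q * (p + q) \<and> b 3 = 1 \<and>
        c 1 = 1 \<and> 2 * c 2 = q * (p + q) \<and> c 3 = (q^2 - 1) * (p + 1) \<and> c 4 = q * (p*q + p + q))"

type_synonym 'a mat = "'a \<Rightarrow> 'a \<Rightarrow> complex"
type_synonym 'a vec = "'a \<Rightarrow> complex"

text \<open>V = C^X: vectors vanishing outside X.\<close>
definition Vsp :: "'a set \<Rightarrow> 'a vec set" where
  "Vsp X = {f. \<forall>y. y \<notin> X \<longrightarrow> f y = 0}"

definition mat_mult :: "'a set \<Rightarrow> 'a mat \<Rightarrow> 'a mat \<Rightarrow> 'a mat" where
  "mat_mult X M N = (\<lambda>y z. \<Sum>w\<in>X. M y w * N w z)"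

definition mat_vec :: "'a set \<Rightarrow> 'a mat \<Rightarrow> 'a vec \<Rightarrow> 'a vec" where
  "mat_vec X M f = (\<lambda>y. \<Sum>z\<in>X. M y z * f z)"

definition adj_mat :: "'a set \<Rightarrow> ('a \<Rightarrow> 'a \<Rightarrow> bool) \<Rightarrow> 'a mat" where
  "adj_mat X Adj = (\<lambda>y z. if y \<in> X \<and> z \<in> X \<and> Adj y z then 1 else 0)"

definition dual_idem :: "'a set \<Rightarrow> ('a \<Rightarrow> 'a \<Rightarrow> bool) \<Rightarrow> 'a \<Rightarrow> nat \<Rightarrow> 'a mat" where
  "dual_idem X Adj x i = (\<lambda>y z. if y = z \<and> y \<in> X \<and> gdist X Adj x y = i then 1 else 0)"

inductive_set Talg :: "'a set \<Rightarrow> ('a \<Rightarrow> 'a \<Rightarrow> bool) \<Rightarrow> 'a \<Rightarrow> 'a mat set"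
  for X Adj x where
  gen_A: "adj_mat X Adj \<in> Talg X Adj x"
| gen_E: "i \<le> 4 \<Longrightarrow> dual_idem X Adj x i \<in> Talg X Adj x"
| add: "M \<in> Talg X Adj x \<Longrightarrow> N \<in> Talg X Adj x \<Longrightarrow> (\<lambda>y z. M y z + N y z) \<in> Talg X Adj x"
| smult: "M \<in> Talg X Adj x \<Longrightarrow> (\<lambda>y z. a * M y z) \<in> Talg X Adj x"
| mult: "M \<in> Talg X Adj x \<Longrightarrow> N \<in> Talg X Adj x \<Longrightarrow> mat_mult X M N \<in> Talg X Adj x"

definition csubspace_of :: "'a set \<Rightarrow> 'a vec set \<Rightarrow> bool" where
  "csubspace_of X W \<longleftrightarrow> W \<subseteq> Vsp X \<and> (\<lambda>_. 0) \<in> W \<and>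
     (\<forall>u\<in>W. \<forall>v\<in>W. (\<lambda>y. u y + v y) \<in> W) \<and> (\<forall>a. \<forall>u\<in>W. (\<lambda>y. a * u y) \<in> W)"

definition T_module :: "'a set \<Rightarrow> ('a \<Rightarrow> 'a \<Rightarrow> bool) \<Rightarrow> 'a \<Rightarrow> 'a vec set \<Rightarrow> bool" where
  "T_module X Adj x W \<longleftrightarrow> csubspace_of X W \<and>
     (\<forall>M\<in>Talg X Adj x. \<forall>w\<in>W. mat_vec X M w \<in> W)"

definition irreducible_T_module :: "'a set \<Rightarrow> ('a \<Rightarrow> 'a \<Rightarrow> bool) \<Rightarrow> 'a \<Rightarrow> 'a vec set \<Rightarrow> bool" where
  "irreducible_T_module X Adj x W \<longleftrightarrow> T_module X Adj x W \<and> W \<noteq> {\<lambda>_. 0} \<and>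
     (\<forall>U. T_module X Adj x U \<and> U \<subseteq> W \<longrightarrow> U = {\<lambda>_. 0} \<or> U = W)"

definition EW :: "'a set \<Rightarrow> ('a \<Rightarrow> 'a \<Rightarrow> bool) \<Rightarrow> 'a \<Rightarrow> nat \<Rightarrow> 'a vec set \<Rightarrow> 'a vec set" where
  "EW X Adj x i W = mat_vec X (dual_idem X Adj x i) ` W"

definition support_idx :: "'a set \<Rightarrow> ('a \<Rightarrow> 'a \<Rightarrow> bool) \<Rightarrow> 'a \<Rightarrow> 'a vec set \<Rightarrow> nat set" where
  "support_idx X Adj x W = {i. i \<le> 4 \<and> EW X Adj x i W \<noteq> {\<lambda>_. 0}}"

definition endpoint :: "'a set \<Rightarrow> ('a \<Rightarrow> 'a \<Rightarrow> bool) \<Rightarrow> 'a \<Rightarrow> 'a vec set \<Rightarrow> nat" where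
  "endpoint X Adj x W = Min (support_idx X Adj x W)"

definition module_diameter :: "'a set \<Rightarrow> ('a \<Rightarrow> 'a \<Rightarrow> bool) \<Rightarrow> 'a \<Rightarrow> 'a vec set \<Rightarrow> nat" where
  "module_diameter X Adj x W = card (support_idx X Adj x W) - 1"

definition dim_le_1 :: "'a vec set \<Rightarrow> bool" where
  "dim_le_1 S \<longleftrightarrow> (\<exists>v. \<forall>w\<in>S. \<exists>a. w = (\<lambda>y. a * v y))"

definition thin :: "'a set \<Rightarrow> ('a \<Rightarrow> 'a \<Rightarrow> bool) \<Rightarrow> 'a \<Rightarrow> 'a vec set \<Rightarrow> bool" where
  "thin X Adj x W \<longleftrightarrow> (\<forall>i. dim_le_1 (EW X Adj x i W))"

end

theory Submission
  imports Defs "HOL-Library.Function_Algebras" "HOL-Computational_Algebra.Fundamental_Theorem_Algebra"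
begin

text \<open>
Since \<open>W\<close> has endpoint 2, it vanishes on the spheres \<open>\<Gamma>\<^sub>0(x)\<close> and \<open>\<Gamma>\<^sub>1(x)\<close>. For
\<open>w \<in> W\<close> and \<open>y \<in> \<Gamma>\<^sub>1(x)\<close>, the vector \<open>A\<^sup>2 E\<^sup>*\<^sub>3 w \<in> W\<close> vanishes at \<open>y\<close>, so \<open>w\<close> sums to zero over
\<open>\<Gamma>\<^sub>3(x) \<inter> \<Gamma>\<^sub>2(y)\<close>. Now \<open>\<Gamma>\<^sub>3(x)\<close> is the neighbourhood of the antipode \<open>z\<close> of \<open>x\<close>, and as \<open>y\<close>
runs through \<open>\<Gamma>\<^sub>1(x)\<close> these sets are exactly the non-neighbourhoods in the local graph
\<open>\<Delta>(z)\<close>. Terwilliger's balanced-set condition, applied to the cosine sequences of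
\<open>\<theta>\<^sub>1 = pq + p + q\<close> and \<open>\<theta>\<^sub>4 = -q\<^sup>2\<close>, shows that \<open>\<Delta>(z)\<close> is strongly regular, and for its
parameters the adjacency matrix of the complement is nonsingular; hence \<open>W\<close> vanishes on
\<open>\<Gamma>\<^sub>3(x)\<close>, and then also at \<open>z\<close>, which has a neighbour in \<open>\<Gamma>\<^sub>3(x)\<close>. So \<open>W\<close> lives on
\<open>\<Gamma>\<^sub>2(x)\<close>, where every element of \<open>T(x)\<close> acts as a polynomial in \<open>A\<close>; an eigenvector of \<open>A\<close>
in \<open>W\<close> therefore spans a submodule, which by irreducibility is all of \<open>W\<close>.
\<close>

section \<open>Eigenvectors in invariant subspaces\<close>

lemma sum_fun_apply: "(\<Sum>v\<in>S. f v) y = (\<Sum>v\<in>S. f v y)"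
  by (induction S rule: infinite_finite_induct) simp_all

interpretation fun_vector_space: vector_space "\<lambda>(a::complex) (f::'a \<Rightarrow> complex) y. a * f y"
  by unfold_locales (simp_all add: fun_eq_iff algebra_simps)

lemma Vsp_subset_span:
  assumes "finite X"
  shows "Vsp X \<subseteq> fun_vector_space.span ((\<lambda>y z. if z = y then 1 else 0) ` X)"
proof
  fix f assume f: "f \<in> Vsp X"
  have "f = (\<Sum>y\<in>X. (\<lambda>z. f y * (if z = y then 1 else 0)))"
    using f assms by (auto simp: fun_eq_iff sum_fun_apply Vsp_def if_distrib cong: if_cong)
  also have "\<dots> \<in> fun_vector_space.span ((\<lambda>y z. if z = y then 1 else 0) ` X)"
    by (intro fun_vector_space.span_sum fun_vector_space.span_scale fun_vector_space.span_base) auto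
  finally show "f \<in> fun_vector_space.span ((\<lambda>y z. if z = y then 1 else 0) ` X)" .
qed

lemma card_independent_le:
  assumes "finite X" "fun_vector_space.independent S" "S \<subseteq> Vsp X"
  shows "card S \<le> card X"
  using fun_vector_space.independent_span_bound[OF finite_imageI[OF assms(1)] assms(2)]
    Vsp_subset_span[OF assms(1)] assms(3) card_image_le[OF assms(1)] by (meson le_trans subset_trans)

definition poly_mat_vec :: "'a set \<Rightarrow> 'a mat \<Rightarrow> complex poly \<Rightarrow> 'a vec \<Rightarrow> 'a vec" where
  "poly_mat_vec X M p w = (\<lambda>y. \<Sum>k\<le>degree p. coeff p k * (mat_vec X M ^^ k) w y)"

lemma poly_mat_vec_atMost:
  assumes "degree p \<le> n"
  shows "poly_mat_vec X M p w = (\<lambda>y. \<Sum>k\<le>n. coeff p k * (mat_vec X M ^^ k) w y)"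
  unfolding poly_mat_vec_def using assms
  by (intro ext sum.mono_neutral_left) (auto simp: coeff_eq_0)

lemma mat_vec_sum:
  "mat_vec X M (\<lambda>y. \<Sum>k\<in>A. c k * f k y) = (\<lambda>y. \<Sum>k\<in>A. c k * mat_vec X M (f k) y)"
  unfolding mat_vec_def
  by (intro ext) (simp add: sum_distrib_left sum.swap[of _ X] algebra_simps)

lemma poly_mat_vec_one: "poly_mat_vec X M 1 w = w"
  by (simp add: poly_mat_vec_def)

lemma poly_mat_vec_smult: "poly_mat_vec X M (smult a p) w = (\<lambda>y. a * poly_mat_vec X M p w y)"
proof -
  have "poly_mat_vec X M (smult a p) w = (\<lambda>y. \<Sum>k\<le>degree p. coeff (smult a p) k * (mat_vec X M ^^ k) w y)"
    by (rule poly_mat_vec_atMost) (rule degree_smult_le)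
  then show ?thesis by (simp add: poly_mat_vec_def sum_distrib_left mult.assoc)
qed

lemma poly_mat_vec_linear_factor:
  "poly_mat_vec X M ([:-r, 1:] * p) w =
     (\<lambda>y. mat_vec X M (poly_mat_vec X M p w) y - r * poly_mat_vec X M p w y)"
proof -
  let ?v = "\<lambda>k. (mat_vec X M ^^ k) w"
  define n where "n = degree p"
  have factor: "[:-r, 1:] * p = pCons 0 p - smult r p"
    by simp
  have "degree ([:-r, 1:] * p) \<le> Suc n"
    unfolding factor n_def by (metis degree_diff_le degree_pCons_le degree_smult_le le_SucI)
  then have "poly_mat_vec X M ([:-r, 1:] * p) w =
      (\<lambda>y. \<Sum>k\<le>Suc n. coeff ([:-r, 1:] * p) k * ?v k y)"
    by (rule poly_mat_vec_atMost)
  also have "\<dots> = (\<lambda>y. (\<Sum>k\<le>n. coeff p k * ?v (Suc k) y) - r * (\<Sum>k\<le>Suc n. coeff p k * ?v k y))"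
  proof -
    have "(\<Sum>k\<le>Suc n. coeff (pCons 0 p) k * ?v k y) = (\<Sum>k\<le>n. coeff p k * ?v (Suc k) y)" for y
      by (subst sum.atMost_Suc_shift) simp
    then show ?thesis
      unfolding factor by (simp add: algebra_simps sum_subtractf sum_distrib_left del: sum.atMost_Suc)
  qed
  also have "(\<lambda>y. \<Sum>k\<le>Suc n. coeff p k * ?v k y) = poly_mat_vec X M p w"
    by (rule poly_mat_vec_atMost[symmetric]) (simp add: n_def)
  also have "(\<lambda>y. \<Sum>k\<le>n. coeff p k * ?v (Suc k) y) = mat_vec X M (poly_mat_vec X M p w)"
    unfolding poly_mat_vec_def n_def mat_vec_sum by simp
  finally show ?thesis .
qed

lemma annihilating_poly_of_repetition:
  assumes "i < j" and repeat: "(mat_vec X M ^^ i) w = (mat_vec X M ^^ j) w"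
  shows "poly_mat_vec X M (monom 1 j - monom 1 i) w = (\<lambda>_. 0)"
proof -
  have "degree (monom (1::complex) j - monom 1 i) \<le> j"
    using assms(1) by (intro degree_diff_le) (simp_all add: degree_monom_eq)
  then show ?thesis
    using assms by (simp add: poly_mat_vec_atMost[where n = j] left_diff_distrib sum_subtractf
        if_distrib[of "\<lambda>c. c * _"] cong: if_cong)
qed

text \<open>Among the \<open>card X + 1\<close> Krylov vectors \<open>M\<^sup>k w\<close>, \<open>k \<le> card X\<close>, two coincide or they are
linearly dependent.\<close>
lemma annihilating_poly_exists:
  assumes X: "finite X" and Krylov: "\<And>k. (mat_vec X M ^^ k) w \<in> Vsp X"
  shows "\<exists>p. p \<noteq> 0 \<and> poly_mat_vec X M p w = (\<lambda>_. 0)"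
proof -
  define n where "n = card X"
  define v where "v k = (mat_vec X M ^^ k) w" for k
  show ?thesis
  proof (cases "inj_on v {..n}")
    case False
    then obtain i j where "i < j" "v i = v j"
      unfolding inj_on_def by (metis linorder_neqE_nat)
    moreover have "coeff (monom (1::complex) j - monom 1 i) j = 1"
      using \<open>i < j\<close> by simp
    then have "monom (1::complex) j - monom 1 i \<noteq> 0" by (metis coeff_0 zero_neq_one)
    ultimately show ?thesis using annihilating_poly_of_repetition unfolding v_def by blast
  next
    case True
    have "\<not> fun_vector_space.independent (v ` {..n})"
    proof
      assume "fun_vector_space.independent (v ` {..n})"
      then have "card (v ` {..n}) \<le> card X"
        using Krylov by (intro card_independent_le[OF X]) (auto simp: v_def)
      then show False using True by (simp add: card_image n_def)
    qed
    then obtain u where u: "\<exists>f\<in>v ` {..n}. u f \<noteq> 0"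
      and dep: "(\<Sum>f\<in>v ` {..n}. (\<lambda>y. u f * f y)) = 0"
      using fun_vector_space.dependent_finite[of "v ` {..n}"] by auto
    define p where "p = (\<Sum>k\<le>n. monom (u (v k)) k)"
    have coeff_p: "coeff p k = (if k \<le> n then u (v k) else 0)" for k
      by (simp add: p_def coeff_sum)
    have "p \<noteq> 0" using u coeff_p by (metis atMost_iff coeff_0 imageE)
    have "degree p \<le> n"
      unfolding p_def by (intro degree_sum_le) (auto intro: le_trans[OF degree_monom_le])
    then have "poly_mat_vec X M p w = (\<lambda>y. \<Sum>k\<le>n. u (v k) * v k y)"
      by (simp add: poly_mat_vec_atMost[where n = n] coeff_p v_def)
    also have "\<dots> = (\<lambda>_. 0)"
      using dep True by (simp add: fun_eq_iff sum_fun_apply sum.reindex)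
    finally show ?thesis using \<open>p \<noteq> 0\<close> by blast
  qed
qed

lemma ex_last_before_value:
  assumes "f 0 \<noteq> c" "f n = c"
  shows "\<exists>j. f j \<noteq> c \<and> f (Suc j) = c"
proof (rule ccontr)
  assume "\<not> ?thesis"
  then have "f j \<noteq> c" for j by (induction j) (use assms(1) in auto)
  then show False using assms(2) by blast
qed

lemma invariant_subspace_has_eigenvector:
  assumes X: "finite X" and W: "csubspace_of X W"
    and inv: "\<And>w. w \<in> W \<Longrightarrow> mat_vec X M w \<in> W"
    and w: "w \<in> W" "w \<noteq> (\<lambda>_. 0)"
  shows "\<exists>v\<in>W. v \<noteq> (\<lambda>_. 0) \<and> (\<exists>\<theta>. mat_vec X M v = (\<lambda>y. \<theta> * v y))"
proof -
  have add: "(\<lambda>y. u y + u' y) \<in> W" and scale: "(\<lambda>y. a * u y) \<in> W"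
    if "u \<in> W" "u' \<in> W" for u u' a
    using W that unfolding csubspace_of_def by blast+
  have "(mat_vec X M ^^ k) w \<in> W" for k
    by (induction k) (simp_all add: w inv)
  then have "(mat_vec X M ^^ k) w \<in> Vsp X" for k
    using W unfolding csubspace_of_def by blast
  then obtain p where p: "p \<noteq> 0" "poly_mat_vec X M p w = (\<lambda>_. 0)"
    using annihilating_poly_exists[OF X] by blast
  obtain r where r: "smult (lead_coeff p) (\<Prod>i<degree p. [:-r i, 1:]) = p"
    using complex_poly_decompose' by blast
  define v where "v j = poly_mat_vec X M (\<Prod>i<j. [:-r i, 1:]) w" for j
  have v_Suc: "v (Suc j) = (\<lambda>y. mat_vec X M (v j) y - r j * v j y)" for j
    unfolding v_def prod.lessThan_Suc mult.commute[of _ "[:-r j, 1:]"] by (rule poly_mat_vec_linear_factor)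
  have vW: "v j \<in> W" for j
  proof (induction j)
    case 0
    then show ?case using w by (simp add: v_def poly_mat_vec_one)
  next
    case (Suc j)
    then have "(\<lambda>y. mat_vec X M (v j) y + (- r j) * v j y) \<in> W"
      by (intro add scale inv)
    then show ?case by (simp add: v_Suc)
  qed
  have "(\<lambda>y. lead_coeff p * v (degree p) y) = poly_mat_vec X M p w"
    unfolding v_def poly_mat_vec_smult[symmetric] r ..
  then have "v (degree p) = (\<lambda>_. 0)"
    using p by (simp add: fun_eq_iff)
  moreover have "v 0 \<noteq> (\<lambda>_. 0)" using w by (simp add: v_def poly_mat_vec_one)
  ultimately obtain j where j: "v j \<noteq> (\<lambda>_. 0)" "v (Suc j) = (\<lambda>_. 0)"
    using ex_last_before_value[of v] by blast
  then have "mat_vec X M (v j) = (\<lambda>y. r j * v j y)"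
    by (simp add: v_Suc fun_eq_iff)
  then show ?thesis using j vW by blast
qed

section \<open>Centred Gram matrices and strongly regular graphs\<close>

text \<open>The hypothesis says that \<open>\<Sum>\<^sub>w f\<^sub>w \<otimes> g\<^sub>w\<close> has squared norm zero.\<close>
lemma gram_products_vanish:
  fixes f g :: "'n \<Rightarrow> 'x \<Rightarrow> real"
  assumes X: "finite X"
    and trace: "(\<Sum>w\<in>N. \<Sum>w'\<in>N. (\<Sum>u\<in>X. f w u * f w' u) * (\<Sum>v\<in>X. g w v * g w' v)) = 0"
  shows "(\<Sum>w\<in>N. (\<Sum>u\<in>X. f w1 u * f w u) * (\<Sum>v\<in>X. g w v * g w2 v)) = 0"
proof -
  define h where "h u v = (\<Sum>w\<in>N. f w u * g w v)" for u v
  define T where "T u v w w' = f w u * g w v * (f w' u * g w' v)" for u v w w'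
  have "(\<Sum>u\<in>X. \<Sum>v\<in>X. (h u v)\<^sup>2) = (\<Sum>u\<in>X. \<Sum>v\<in>X. \<Sum>w\<in>N. \<Sum>w'\<in>N. T u v w w')"
    unfolding h_def T_def by (simp add: power2_eq_square sum_product)
  also have "\<dots> = (\<Sum>u\<in>X. \<Sum>w\<in>N. \<Sum>v\<in>X. \<Sum>w'\<in>N. T u v w w')"
    by (intro sum.cong refl sum.swap)
  also have "\<dots> = (\<Sum>u\<in>X. \<Sum>w\<in>N. \<Sum>w'\<in>N. \<Sum>v\<in>X. T u v w w')"
    by (intro sum.cong refl sum.swap)
  also have "\<dots> = (\<Sum>w\<in>N. \<Sum>u\<in>X. \<Sum>w'\<in>N. \<Sum>v\<in>X. T u v w w')"
    by (rule sum.swap)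
  also have "\<dots> = (\<Sum>w\<in>N. \<Sum>w'\<in>N. \<Sum>u\<in>X. \<Sum>v\<in>X. T u v w w')"
    by (intro sum.cong refl sum.swap)
  also have "\<dots> = (\<Sum>w\<in>N. \<Sum>w'\<in>N. (\<Sum>u\<in>X. f w u * f w' u) * (\<Sum>v\<in>X. g w v * g w' v))"
    unfolding T_def by (simp add: sum_product algebra_simps)
  finally have "(\<Sum>u\<in>X. \<Sum>v\<in>X. (h u v)\<^sup>2) = 0" using trace by simp
  then have h0: "h u v = 0" if "u \<in> X" "v \<in> X" for u v
    using that X by (simp add: sum_nonneg sum_nonneg_eq_0_iff)
  have "(\<Sum>w\<in>N. (\<Sum>u\<in>X. f w1 u * f w u) * (\<Sum>v\<in>X. g w v * g w2 v)) =
      (\<Sum>w\<in>N. \<Sum>u\<in>X. \<Sum>v\<in>X. f w1 u * g w2 v * (f w u * g w v))"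
    by (simp add: sum_product algebra_simps)
  also have "\<dots> = (\<Sum>u\<in>X. \<Sum>w\<in>N. \<Sum>v\<in>X. f w1 u * g w2 v * (f w u * g w v))"
    by (rule sum.swap)
  also have "\<dots> = (\<Sum>u\<in>X. \<Sum>v\<in>X. \<Sum>w\<in>N. f w1 u * g w2 v * (f w u * g w v))"
    by (intro sum.cong refl sum.swap)
  also have "\<dots> = (\<Sum>u\<in>X. \<Sum>v\<in>X. f w1 u * g w2 v * h u v)"
    by (simp add: h_def sum_distrib_left)
  also have "\<dots> = 0" using h0 by simp
  finally show ?thesis .
qed

lemma centered_columns_gram:
  fixes F :: "'a \<Rightarrow> 'a \<Rightarrow> real"
  assumes NX: "N \<subseteq> X" and K: "K = real (card N)" "K \<noteq> 0"
    and sym: "\<And>u v. u \<in> X \<Longrightarrow> v \<in> X \<Longrightarrow> F u v = F v u"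
    and square: "\<And>u v. u \<in> X \<Longrightarrow> v \<in> X \<Longrightarrow> (\<Sum>m\<in>X. F u m * F m v) = cf * F u v"
    and row_sum: "\<And>w. w \<in> N \<Longrightarrow> (\<Sum>m\<in>N. F w m) = \<rho>"
    and w: "w \<in> N" "w' \<in> N"
  shows "(\<Sum>u\<in>X. (F u w - (\<Sum>m\<in>N. F u m) / K) * (F u w' - (\<Sum>m\<in>N. F u m) / K))
    = cf * (F w w' - \<rho> / K)"
proof -
  define s where "s u = (\<Sum>m\<in>N. F u m)" for u
  have col: "(\<Sum>u\<in>X. F u v * F u v') = cf * F v v'" if "v \<in> X" "v' \<in> X" for v v'
    using square[OF that] sym that by (metis (no_types, lifting) sum.cong)
  have col_s: "(\<Sum>u\<in>X. s u * F u v) = cf * \<rho>" if "v \<in> N" for v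
  proof -
    have "(\<Sum>u\<in>X. s u * F u v) = (\<Sum>m\<in>N. \<Sum>u\<in>X. F u v * F u m)"
      unfolding s_def sum_distrib_right by (subst sum.swap) (simp add: mult.commute)
    also have "\<dots> = (\<Sum>m\<in>N. cf * F v m)" using col NX that by (intro sum.cong) auto
    also have "\<dots> = cf * \<rho>" using row_sum[OF that] by (simp add: sum_distrib_left[symmetric])
    finally show ?thesis .
  qed
  have s_s: "(\<Sum>u\<in>X. s u * s u) = cf * K * \<rho>"
  proof -
    have "(\<Sum>u\<in>X. s u * s u) = (\<Sum>m\<in>N. \<Sum>u\<in>X. s u * F u m)"
      by (simp add: s_def sum_distrib_left sum.swap[of _ X])
    also have "\<dots> = (\<Sum>m\<in>N. cf * \<rho>)" using col_s by simp
    finally show ?thesis using K by simp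
  qed
  have "(\<Sum>u\<in>X. (F u w - s u / K) * (F u w' - s u / K)) =
      (\<Sum>u\<in>X. F u w * F u w') - (\<Sum>u\<in>X. s u * F u w) / K - (\<Sum>u\<in>X. s u * F u w') / K
      + (\<Sum>u\<in>X. s u * s u) / (K * K)"
    by (simp add: algebra_simps sum.distrib sum_subtractf sum_divide_distrib)
  also have "\<dots> = cf * (F w w' - \<rho> / K)"
  proof -
    have "(\<Sum>u\<in>X. F u w * F u w') = cf * F w w'" using w NX by (intro col) auto
    then show ?thesis using K(2) unfolding col_s[OF w(1)] col_s[OF w(2)] s_s by (simp add: field_simps)
  qed
  finally show ?thesis unfolding s_def .
qed

text \<open>Terwilliger's balanced-set argument: by \<open>centered_columns_gram\<close> both centred matrices are
Gram matrices, and positive semidefinite matrices with vanishing trace inner product multiply to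
zero.\<close>
lemma centered_product_vanishes:
  fixes F G :: "'a \<Rightarrow> 'a \<Rightarrow> real"
  assumes X: "finite X" and NX: "N \<subseteq> X" and K: "K = real (card N)" "K \<noteq> 0"
    and F_sym: "\<And>u v. u \<in> X \<Longrightarrow> v \<in> X \<Longrightarrow> F u v = F v u"
    and G_sym: "\<And>u v. u \<in> X \<Longrightarrow> v \<in> X \<Longrightarrow> G u v = G v u"
    and F_square: "\<And>u v. u \<in> X \<Longrightarrow> v \<in> X \<Longrightarrow> (\<Sum>m\<in>X. F u m * F m v) = cf * F u v"
    and G_square: "\<And>u v. u \<in> X \<Longrightarrow> v \<in> X \<Longrightarrow> (\<Sum>m\<in>X. G u m * G m v) = cg * G u v"
    and F_rows: "\<And>w. w \<in> N \<Longrightarrow> (\<Sum>m\<in>N. F w m) = \<rho>"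
    and G_rows: "\<And>w. w \<in> N \<Longrightarrow> (\<Sum>m\<in>N. G w m) = \<rho>'"
    and trace: "(\<Sum>w\<in>N. \<Sum>w'\<in>N. (F w w' - \<rho> / K) * (G w w' - \<rho>' / K)) = 0"
    and cf: "cf \<noteq> 0" and cg: "cg \<noteq> 0"
    and w: "w1 \<in> N" "w2 \<in> N"
  shows "(\<Sum>w\<in>N. (F w1 w - \<rho> / K) * (G w w2 - \<rho>' / K)) = 0"
proof -
  define f where "f w u = F u w - (\<Sum>m\<in>N. F u m) / K" for w u
  define g where "g w u = G u w - (\<Sum>m\<in>N. G u m) / K" for w u
  have f: "(\<Sum>u\<in>X. f w u * f w' u) = cf * (F w w' - \<rho> / K)" if "w \<in> N" "w' \<in> N" for w w'
    unfolding f_def by (rule centered_columns_gram[OF NX K F_sym F_square F_rows that])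
  have g: "(\<Sum>u\<in>X. g w u * g w' u) = cg * (G w w' - \<rho>' / K)" if "w \<in> N" "w' \<in> N" for w w'
    unfolding g_def by (rule centered_columns_gram[OF NX K G_sym G_square G_rows that])
  have "(\<Sum>u\<in>X. f w u * f w' u) * (\<Sum>v\<in>X. g w v * g w' v) =
      cf * cg * ((F w w' - \<rho> / K) * (G w w' - \<rho>' / K))" if "w \<in> N" "w' \<in> N" for w w'
    using f[OF that] g[OF that] by simp
  then have "(\<Sum>w\<in>N. \<Sum>w'\<in>N. (\<Sum>u\<in>X. f w u * f w' u) * (\<Sum>v\<in>X. g w v * g w' v)) =
      cf * cg * (\<Sum>w\<in>N. \<Sum>w'\<in>N. (F w w' - \<rho> / K) * (G w w' - \<rho>' / K))"
    by (simp add: sum_distrib_left)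
  then have vanish: "(\<Sum>w\<in>N. (\<Sum>u\<in>X. f w1 u * f w u) * (\<Sum>v\<in>X. g w v * g w2 v)) = 0"
    using trace by (intro gram_products_vanish[OF X]) simp
  have "(\<Sum>u\<in>X. f w1 u * f w u) * (\<Sum>v\<in>X. g w v * g w2 v) =
      cf * cg * ((F w1 w - \<rho> / K) * (G w w2 - \<rho>' / K))" if "w \<in> N" for w
    using f[OF w(1) that] g[OF that w(2)] by simp
  then have "(\<Sum>w\<in>N. (\<Sum>u\<in>X. f w1 u * f w u) * (\<Sum>v\<in>X. g w v * g w2 v)) =
      cf * cg * (\<Sum>w\<in>N. (F w1 w - \<rho> / K) * (G w w2 - \<rho>' / K))"
    by (simp add: sum_distrib_left)
  then show ?thesis using vanish cf cg by simp
qed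

lemma sum_split_neighbours:
  assumes N: "finite N" and u: "u \<in> N" "\<not> R u u"
  shows "(\<Sum>t\<in>N. f t) = f u + (\<Sum>t\<in>{t\<in>N. R u t}. f t) + (\<Sum>t\<in>{t\<in>N. t \<noteq> u \<and> \<not> R u t}. f t)"
proof -
  define A where "A = {t\<in>N. R u t}"
  define B where "B = {t\<in>N. t \<noteq> u \<and> \<not> R u t}"
  have fin: "finite A" "finite B" using N unfolding A_def B_def by auto
  have "N = insert u A \<union> B" using u unfolding A_def B_def by auto
  moreover have "insert u A \<inter> B = {}" "u \<notin> A" using u unfolding A_def B_def by auto
  ultimately have "(\<Sum>t\<in>N. f t) = (\<Sum>t\<in>insert u A. f t) + (\<Sum>t\<in>B. f t)"
    using fin by (simp add: sum.union_disjoint del: Un_insert_left)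
  also have "(\<Sum>t\<in>insert u A. f t) = f u + (\<Sum>t\<in>A. f t)"
    using fin \<open>u \<notin> A\<close> by simp
  finally show ?thesis unfolding A_def B_def .
qed

lemma srg_adjacency_square:
  fixes w :: "'a \<Rightarrow> 'b::field" and k lam mu :: 'b
  assumes N: "finite N" and u: "u \<in> N"
    and irrefl: "\<And>v. v \<in> N \<Longrightarrow> \<not> R v v"
    and common: "\<And>v r. v \<in> N \<Longrightarrow> r \<in> N \<Longrightarrow>
       of_nat (card {t\<in>N. R v t \<and> R t r}) = (if v = r then k else if R v r then lam else mu)"
  shows "(\<Sum>t\<in>{t\<in>N. R u t}. \<Sum>r\<in>{r\<in>N. R t r}. w r) =
    k * w u + lam * (\<Sum>t\<in>{t\<in>N. R u t}. w t) + mu * (\<Sum>t\<in>{t\<in>N. t \<noteq> u \<and> \<not> R u t}. w t)"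
proof -
  define c where "c r = (if u = r then k else if R u r then lam else mu)" for r
  have "(\<Sum>t\<in>{t\<in>N. R u t}. \<Sum>r\<in>{r\<in>N. R t r}. w r) = (\<Sum>r\<in>N. c r * w r)"
    using N common[OF u] by (simp add: sum.swap_restrict conj_assoc c_def)
  also have "\<dots> = k * w u + (\<Sum>t\<in>{t\<in>N. R u t}. c t * w t) + (\<Sum>t\<in>{t\<in>N. t \<noteq> u \<and> \<not> R u t}. c t * w t)"
    by (subst sum_split_neighbours[where R = R, OF N u irrefl[OF u]]) (simp add: c_def)
  also have "(\<Sum>t\<in>{t\<in>N. R u t}. c t * w t) = lam * (\<Sum>t\<in>{t\<in>N. R u t}. w t)"
    using irrefl[OF u] by (auto simp: c_def sum_distrib_left intro: sum.cong)
  also have "(\<Sum>t\<in>{t\<in>N. t \<noteq> u \<and> \<not> R u t}. c t * w t) = mu * (\<Sum>t\<in>{t\<in>N. t \<noteq> u \<and> \<not> R u t}. w t)"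
    by (auto simp: c_def sum_distrib_left intro: sum.cong)
  finally show ?thesis .
qed

text \<open>In a strongly regular graph with \<open>k \<noteq> 0, \<lambda> + 1\<close> the complement has nonsingular adjacency matrix.\<close>
lemma complement_sums_vanish:
  fixes w :: "'a \<Rightarrow> 'b::field" and k lam mu :: 'b
  assumes N: "finite N"
    and irrefl: "\<And>v. v \<in> N \<Longrightarrow> \<not> R v v"
    and degree: "\<And>v. v \<in> N \<Longrightarrow> of_nat (card {t\<in>N. R v t}) = k"
    and common: "\<And>v r. v \<in> N \<Longrightarrow> r \<in> N \<Longrightarrow>
       of_nat (card {t\<in>N. R v t \<and> R t r}) = (if v = r then k else if R v r then lam else mu)"
    and k: "k \<noteq> 0" "k \<noteq> lam + 1"
    and sums: "\<And>v. v \<in> N \<Longrightarrow> (\<Sum>t\<in>{t\<in>N. t \<noteq> v \<and> \<not> R v t}. w t) = 0"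
    and v: "v \<in> N"
  shows "w v = 0"
proof -
  define H where "H = (\<Sum>t\<in>N. w t)"
  define L where "L u = (\<Sum>t\<in>{t\<in>N. R u t}. w t)" for u
  have H_L: "H = w u + L u" if u: "u \<in> N" for u
    using sum_split_neighbours[where R = R, OF N u irrefl[OF u], of w] sums[OF u]
    unfolding H_def L_def by simp
  have const: "w u = H" if u: "u \<in> N" for u
  proof -
    have "(\<Sum>t\<in>{t\<in>N. R u t}. L t) = k * w u + lam * L u"
      using srg_adjacency_square[OF N u irrefl common, of w] sums[OF u] unfolding L_def by simp
    moreover have "(\<Sum>t\<in>{t\<in>N. R u t}. L t) = (\<Sum>t\<in>{t\<in>N. R u t}. H - w t)"
    proof (intro sum.cong refl)
      fix t assume "t \<in> {t\<in>N. R u t}"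
      then show "L t = H - w t" using H_L[of t] by (simp add: algebra_simps)
    qed
    then have "(\<Sum>t\<in>{t\<in>N. R u t}. L t) = k * H - L u"
      using degree[OF u] by (simp add: sum_subtractf L_def)
    ultimately have "(k - (lam + 1)) * (H - w u) = 0"
      using H_L[OF u] by (simp add: algebra_simps)
    then show ?thesis using k(2) by simp
  qed
  have "L v = (\<Sum>t\<in>{t\<in>N. R v t}. H)"
    unfolding L_def by (rule sum.cong[OF refl]) (simp add: const)
  then have "L v = k * H" using degree[OF v] by simp
  moreover have "L v = 0" using H_L[OF v] const[OF v] by (metis add_cancel_right_right)
  ultimately show ?thesis using const[OF v] k(1) by simp
qed

section \<open>Modules of the Terwilliger algebra\<close>

lemma mat_vec_scale: "mat_vec X M (\<lambda>y. a * f y) = (\<lambda>y. a * mat_vec X M f y)"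
  unfolding mat_vec_def by (simp add: sum_distrib_left algebra_simps)

lemma mat_vec_mat_mult:
  assumes "finite X" shows "mat_vec X (mat_mult X M N) f = mat_vec X M (mat_vec X N f)"
proof
  fix y
  have "mat_vec X (mat_mult X M N) f y = (\<Sum>z\<in>X. \<Sum>w\<in>X. M y w * N w z * f z)"
    unfolding mat_vec_def mat_mult_def by (simp add: sum_distrib_right)
  also have "\<dots> = (\<Sum>w\<in>X. \<Sum>z\<in>X. M y w * N w z * f z)" by (rule sum.swap)
  also have "\<dots> = mat_vec X M (mat_vec X N f) y"
    unfolding mat_vec_def by (simp add: sum_distrib_left mult.assoc)
  finally show "mat_vec X (mat_mult X M N) f y = mat_vec X M (mat_vec X N f) y" .
qed

lemma mat_vec_dual_idem:
  assumes "finite X"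
  shows "mat_vec X (dual_idem X Adj x i) w = (\<lambda>y. if y \<in> X \<and> gdist X Adj x y = i then w y else 0)"
  using assms by (auto simp: fun_eq_iff mat_vec_def dual_idem_def if_distrib[of "\<lambda>c. c * _"] cong: if_cong)

lemma mat_vec_adj_mat:
  assumes "finite X"
  shows "mat_vec X (adj_mat X Adj) w = (\<lambda>y. if y \<in> X then \<Sum>m\<in>{m\<in>X. Adj y m}. w m else 0)"
  using assms by (auto simp: fun_eq_iff mat_vec_def adj_mat_def sum.inter_filter if_distrib[of "\<lambda>c. c * _"] cong: if_cong)

lemma T_module_subspace: "T_module X Adj x W \<Longrightarrow> csubspace_of X W"
  unfolding T_module_def by simp

lemma T_module_adj_mat: "T_module X Adj x W \<Longrightarrow> w \<in> W \<Longrightarrow> mat_vec X (adj_mat X Adj) w \<in> W"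
  unfolding T_module_def by (blast intro: Talg.gen_A)

lemma T_module_dual_idem:
  "T_module X Adj x W \<Longrightarrow> i \<le> 4 \<Longrightarrow> w \<in> W \<Longrightarrow> mat_vec X (dual_idem X Adj x i) w \<in> W"
  unfolding T_module_def by (blast intro: Talg.gen_E)

lemma T_module_vanishes_outside: "T_module X Adj x W \<Longrightarrow> w \<in> W \<Longrightarrow> y \<notin> X \<Longrightarrow> w y = 0"
  unfolding T_module_def csubspace_of_def Vsp_def by blast

lemma mem_support_idx_iff:
  assumes X: "finite X" and W: "T_module X Adj x W"
  shows "i \<in> support_idx X Adj x W \<longleftrightarrow>
    i \<le> 4 \<and> (\<exists>w\<in>W. \<exists>y\<in>X. gdist X Adj x y = i \<and> w y \<noteq> 0)"
proof -
  have "(\<lambda>_. 0) \<in> W" using W unfolding T_module_def csubspace_of_def by blast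
  then have "(\<lambda>_. 0) \<in> EW X Adj x i W"
    unfolding EW_def mat_vec_dual_idem[OF X] by (auto intro: image_eqI[of _ _ "\<lambda>_. 0"])
  then have "EW X Adj x i W \<noteq> {\<lambda>_. 0} \<longleftrightarrow> (\<exists>w\<in>W. mat_vec X (dual_idem X Adj x i) w \<noteq> (\<lambda>_. 0))"
    unfolding EW_def by blast
  then show ?thesis
    unfolding support_idx_def mat_vec_dual_idem[OF X] by (auto simp: fun_eq_iff)
qed

lemma Talg_acts_by_scalar:
  assumes X: "finite X" and v: "v \<in> Vsp X"
    and eigen: "mat_vec X (adj_mat X Adj) v = (\<lambda>y. \<theta> * v y)"
    and layer: "\<And>y. v y \<noteq> 0 \<Longrightarrow> gdist X Adj x y = i"
    and M: "M \<in> Talg X Adj x"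
  shows "\<exists>a. mat_vec X M v = (\<lambda>y. a * v y)"
  using M
proof (induction rule: Talg.induct)
  case gen_A
  then show ?case using eigen by blast
next
  case (gen_E j)
  have "mat_vec X (dual_idem X Adj x j) v y = (if j = i then 1 else 0) * v y" for y
  proof (cases "v y = 0")
    case False
    then have "y \<in> X" "gdist X Adj x y = i" using v layer unfolding Vsp_def by auto
    then show ?thesis unfolding mat_vec_dual_idem[OF X] by simp
  qed (simp add: mat_vec_dual_idem[OF X])
  then show ?case by (intro exI ext)
next
  case (add M1 M2)
  from add.IH obtain a a' where "mat_vec X M1 v = (\<lambda>y. a * v y)" "mat_vec X M2 v = (\<lambda>y. a' * v y)" by blast
  then have "mat_vec X (\<lambda>y z. M1 y z + M2 y z) v = (\<lambda>y. (a + a') * v y)"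
    unfolding mat_vec_def by (simp add: fun_eq_iff distrib_right sum.distrib)
  then show ?case by (rule exI)
next
  case (smult M1 b)
  from smult.IH obtain a where a: "mat_vec X M1 v = (\<lambda>y. a * v y)" by (rule exE)
  have "mat_vec X (\<lambda>y z. b * M1 y z) v = (\<lambda>y. b * mat_vec X M1 v y)"
    unfolding mat_vec_def by (simp add: sum_distrib_left mult.assoc)
  also have "\<dots> = (\<lambda>y. (b * a) * v y)"
    unfolding a by (rule ext) (rule mult.assoc[symmetric])
  finally have "mat_vec X (\<lambda>y z. b * M1 y z) v = (\<lambda>y. (b * a) * v y)" .
  then show ?case by (rule exI)
next
  case (mult M1 M2)
  from mult.IH obtain a a' where a: "mat_vec X M1 v = (\<lambda>y. a * v y)" "mat_vec X M2 v = (\<lambda>y. a' * v y)"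
    by blast
  have "mat_vec X (mat_mult X M1 M2) v = (\<lambda>y. a' * (a * v y))"
    unfolding mat_vec_mat_mult[OF X] a(2) mat_vec_scale a(1) ..
  then have "mat_vec X (mat_mult X M1 M2) v = (\<lambda>y. (a' * a) * v y)"
    by (simp only: mult.assoc)
  then show ?case by (rule exI)
qed

lemma eigenvector_span_T_module:
  assumes X: "finite X" and v: "v \<in> Vsp X"
    and eigen: "mat_vec X (adj_mat X Adj) v = (\<lambda>y. \<theta> * v y)"
    and layer: "\<And>y. v y \<noteq> 0 \<Longrightarrow> gdist X Adj x y = i"
  shows "T_module X Adj x {f. \<exists>a. f = (\<lambda>y. a * v y)}"
proof -
  define U where "U = {f. \<exists>a. f = (\<lambda>y. a * v y)}"
  have in_U: "(\<lambda>y. a * v y) \<in> U" for a unfolding U_def by blast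
  have "T_module X Adj x U"
    unfolding T_module_def csubspace_of_def
  proof (intro conjI ballI allI subsetI)
    show "f \<in> Vsp X" if "f \<in> U" for f
      using that v by (auto simp: U_def Vsp_def)
    show "(\<lambda>_. 0) \<in> U" using in_U[of 0] by simp
    show "(\<lambda>y. f y + g y) \<in> U" if "f \<in> U" "g \<in> U" for f g
      using that in_U by (auto simp: U_def distrib_right[symmetric])
    show "(\<lambda>y. b * f y) \<in> U" if "f \<in> U" for f b
      using that in_U by (auto simp: U_def mult.assoc[symmetric])
    show "mat_vec X M f \<in> U" if M: "M \<in> Talg X Adj x" and f: "f \<in> U" for M f
    proof -
      obtain a' where "mat_vec X M v = (\<lambda>y. a' * v y)" using Talg_acts_by_scalar[OF X v eigen layer M] by blast
      then show ?thesis using f in_U by (auto simp: U_def mat_vec_scale mult.assoc[symmetric])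
    qed
  qed
  then show ?thesis unfolding U_def .
qed

lemma module_diameter_on_sphere:
  assumes X: "finite X" and W: "T_module X Adj x W"
    and sphere: "\<And>w y. w \<in> W \<Longrightarrow> w y \<noteq> 0 \<Longrightarrow> gdist X Adj x y = i"
  shows "module_diameter X Adj x W = 0"
proof -
  have "support_idx X Adj x W \<subseteq> {i}"
  proof
    fix j assume "j \<in> support_idx X Adj x W"
    then obtain w y where "w \<in> W" "w y \<noteq> 0" "gdist X Adj x y = j"
      unfolding mem_support_idx_iff[OF X W] by blast
    then show "j \<in> {i}" using sphere[of w y] by simp
  qed
  then have "card (support_idx X Adj x W) \<le> card {i}"
    by (intro card_mono) auto
  then show ?thesis unfolding module_diameter_def by simp
qed

text \<open>Such a module is spanned by any eigenvector of \<open>A\<close> in it, on which \<open>T(x)\<close> acts by scalars.\<close>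
lemma irreducible_T_module_on_sphere:
  assumes X: "finite X" and W: "irreducible_T_module X Adj x W"
    and sphere: "\<And>w y. w \<in> W \<Longrightarrow> w y \<noteq> 0 \<Longrightarrow> gdist X Adj x y = i"
  shows "module_diameter X Adj x W = 0 \<and> thin X Adj x W"
proof
  have TW: "T_module X Adj x W" and W_nz: "W \<noteq> {\<lambda>_. 0}"
    and irr: "\<And>U. T_module X Adj x U \<Longrightarrow> U \<subseteq> W \<Longrightarrow> U = {\<lambda>_. 0} \<or> U = W"
    using W unfolding irreducible_T_module_def by auto
  show "module_diameter X Adj x W = 0" by (rule module_diameter_on_sphere[OF X TW sphere])
  have "(\<lambda>_. 0) \<in> W" using TW unfolding T_module_def csubspace_of_def by blast
  then obtain w where "w \<in> W" "w \<noteq> (\<lambda>_. 0)" using W_nz by blast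
  then obtain v \<theta> where v: "v \<in> W" "v \<noteq> (\<lambda>_. 0)" and eigen: "mat_vec X (adj_mat X Adj) v = (\<lambda>y. \<theta> * v y)"
    using invariant_subspace_has_eigenvector[OF X T_module_subspace[OF TW] T_module_adj_mat[OF TW]]
    by blast
  define U where "U = {f. \<exists>a. f = (\<lambda>y. a * v y)}"
  have "v \<in> Vsp X" using TW v(1) unfolding T_module_def csubspace_of_def by blast
  then have "T_module X Adj x U"
    unfolding U_def using eigen sphere[OF v(1)] by (intro eigenvector_span_T_module[OF X]) auto
  moreover have "U \<subseteq> W" using TW v(1) unfolding U_def T_module_def csubspace_of_def by blast
  moreover have "v \<in> U" unfolding U_def by (auto intro: exI[of _ 1])
  ultimately have "U = W" using irr v(2) by blast
  show "thin X Adj x W"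
    unfolding thin_def dim_le_1_def
  proof
    fix j
    show "\<exists>v'. \<forall>w\<in>EW X Adj x j W. \<exists>a. w = (\<lambda>y. a * v' y)"
      unfolding EW_def \<open>U = W\<close>[symmetric] U_def
      by (intro exI[of _ "mat_vec X (dual_idem X Adj x j) v"]) (auto simp: mat_vec_scale)
  qed
qed

section \<open>Distance in connected graphs\<close>

locale connected_simple_graph =
  fixes X :: "'a set" and Adj :: "'a \<Rightarrow> 'a \<Rightarrow> bool"
  assumes simple: "simple_graph X Adj" and connected: "connected_graph X Adj"
begin

abbreviation d :: "'a \<Rightarrow> 'a \<Rightarrow> nat" where "d \<equiv> gdist X Adj"
abbreviation nbr :: "'a \<Rightarrow> 'a set" where "nbr u \<equiv> {m\<in>X. Adj u m}"
abbreviation sphere :: "'a \<Rightarrow> nat \<Rightarrow> 'a set" where "sphere u i \<equiv> {m\<in>X. d u m = i}"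

lemma finite_X: "finite X"
  using simple unfolding simple_graph_def by auto

lemma adj_in_X: "Adj y z \<Longrightarrow> y \<in> X \<and> z \<in> X"
  using simple unfolding simple_graph_def by auto

lemma adj_sym: "Adj y z \<Longrightarrow> Adj z y"
  using simple unfolding simple_graph_def by auto

lemma adj_irrefl: "\<not> Adj y y"
  using simple unfolding simple_graph_def by auto

lemma walk_in_X: "walk X Adj n x y \<Longrightarrow> x \<in> X \<and> y \<in> X"
  by (induction rule: walk.induct) auto

lemma walk_trans: "walk X Adj m y z \<Longrightarrow> walk X Adj n x y \<Longrightarrow> walk X Adj (n + m) x z"
proof (induction m y z rule: walk.induct)
  case (walkS m y z z')
  have "walk X Adj (n + m) x z" using walkS.IH walkS.prems .
  from walk.walkS[OF this walkS.hyps(2,3)] show ?case by simp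
qed simp

lemma walk_adj: assumes "Adj x y" shows "walk X Adj 1 x y"
proof -
  have "walk X Adj 0 x x" using adj_in_X[OF assms] by (simp add: walk.walk0)
  from walk.walkS[OF this assms] show ?thesis using adj_in_X[OF assms] by simp
qed

lemma walk_sym: "walk X Adj n x y \<Longrightarrow> walk X Adj n y x"
proof (induction n x y rule: walk.induct)
  case (walkS n x y z)
  then show ?case using walk_trans[OF walkS.IH walk_adj[OF adj_sym]] by simp
qed (rule walk.walk0)

lemma walk_split:
  "walk X Adj n x y \<Longrightarrow> j \<le> n \<Longrightarrow> \<exists>z. walk X Adj j x z \<and> walk X Adj (n - j) z y"
proof (induction n x y rule: walk.induct)
  case (walk0 x)
  then show ?case using walk.walk0[of x X Adj] by auto
next
  case (walkS n x y z)
  show ?case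
  proof (cases "j = Suc n")
    case True
    then show ?thesis using walk.walkS[OF walkS.hyps] walk.walk0[OF walkS.hyps(3)] by auto
  next
    case False
    then have "j \<le> n" using walkS.prems by simp
    then obtain z' where z': "walk X Adj j x z'" "walk X Adj (n - j) z' y"
      using walkS.IH by blast
    have "walk X Adj (Suc (n - j)) z' z" by (rule walk.walkS[OF z'(2) walkS.hyps(2,3)])
    then show ?thesis using z'(1) \<open>j \<le> n\<close> by (auto simp: Suc_diff_le)
  qed
qed

lemma walk_0_eq: assumes "walk X Adj 0 x y" shows "x = y"
  using assms by cases auto

lemma walk_1_adj: assumes "walk X Adj 1 x y" shows "Adj x y"
  using assms by cases (auto dest: walk_0_eq)

lemma dist_walk: assumes "x \<in> X" "y \<in> X" shows "walk X Adj (d x y) x y"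
proof -
  have "\<exists>n. walk X Adj n x y" using connected assms unfolding connected_graph_def by blast
  then show ?thesis unfolding gdist_def by (rule LeastI_ex)
qed

lemma dist_le: "walk X Adj n x y \<Longrightarrow> d x y \<le> n"
  unfolding gdist_def by (rule Least_le)

lemma dist_self: "x \<in> X \<Longrightarrow> d x x = 0"
  using dist_le[OF walk.walk0] by simp

lemma dist_eq_0_iff: "x \<in> X \<Longrightarrow> y \<in> X \<Longrightarrow> d x y = 0 \<longleftrightarrow> x = y"
  using dist_walk[of x y] walk_0_eq dist_self by auto

lemma dist_commute: "x \<in> X \<Longrightarrow> y \<in> X \<Longrightarrow> d x y = d y x"
  using dist_le[OF walk_sym[OF dist_walk]] by (meson antisym)

lemma dist_triangle: "x \<in> X \<Longrightarrow> y \<in> X \<Longrightarrow> z \<in> X \<Longrightarrow> d x z \<le> d x y + d y z"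
  using dist_le[OF walk_trans[OF dist_walk[of y z] dist_walk[of x y]]] by simp

lemma dist_eq_1_iff: "x \<in> X \<Longrightarrow> y \<in> X \<Longrightarrow> d x y = 1 \<longleftrightarrow> Adj x y"
proof
  assume "x \<in> X" "y \<in> X" "d x y = 1"
  then show "Adj x y" using dist_walk[of x y] walk_1_adj by simp
next
  assume "x \<in> X" "y \<in> X" "Adj x y"
  then show "d x y = 1"
    using dist_le[OF walk_adj] dist_eq_0_iff adj_irrefl by (metis le_neq_implies_less less_one)
qed

lemma dist_adj: "Adj u m \<Longrightarrow> v \<in> X \<Longrightarrow> d v m \<le> d v u + 1 \<and> d v u \<le> d v m + 1"
  using dist_triangle[of v u m] dist_triangle[of v m u] dist_eq_1_iff adj_sym adj_in_X
  by (metis add_le_cancel_left)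

lemma dist_geodesic_point:
  assumes "x \<in> X" "y \<in> X" "j \<le> d x y"
  shows "\<exists>z\<in>X. d x z = j \<and> d z y = d x y - j"
proof -
  obtain z where z: "walk X Adj j x z" "walk X Adj (d x y - j) z y"
    using walk_split[OF dist_walk[OF assms(1,2)] assms(3)] by blast
  have "z \<in> X" using walk_in_X[OF z(1)] by simp
  moreover have "d x y \<le> d x z + d z y" using dist_triangle assms(1,2) \<open>z \<in> X\<close> by blast
  moreover have "d x z \<le> j" "d z y \<le> d x y - j" using dist_le[OF z(1)] dist_le[OF z(2)] .
  ultimately have "d x z = j" "d z y = d x y - j" using assms(3) by linarith+
  then show ?thesis using \<open>z \<in> X\<close> by blast
qed

end

section \<open>Distance-regular graphs\<close>

locale drg =
  fixes X :: "'a set" and Adj :: "'a \<Rightarrow> 'a \<Rightarrow> bool" and D :: nat and b c :: "nat \<Rightarrow> nat"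
  assumes distance_regular: "distance_regular X Adj D b c"
begin

sublocale connected_simple_graph X Adj
  using distance_regular by unfold_locales (auto simp: distance_regular_def)

lemma dist_le_diam: "x \<in> X \<Longrightarrow> y \<in> X \<Longrightarrow> d x y \<le> D"
  using distance_regular unfolding distance_regular_def graph_diameter_def by auto

lemma card_c: "x \<in> X \<Longrightarrow> y \<in> X \<Longrightarrow> 1 \<le> d x y \<Longrightarrow>
    card {z\<in>X. Adj y z \<and> d x z = d x y - 1} = c (d x y)"
  using distance_regular unfolding distance_regular_def by auto

lemma card_b: "x \<in> X \<Longrightarrow> y \<in> X \<Longrightarrow> d x y < D \<Longrightarrow>
    card {z\<in>X. Adj y z \<and> d x z = d x y + 1} = b (d x y)"
  using distance_regular unfolding distance_regular_def by auto

lemma ex_dist: assumes "i \<le> D" shows "\<exists>x\<in>X. \<exists>y\<in>X. d x y = i"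
proof -
  obtain x y where "x \<in> X" "y \<in> X" "d x y = D"
    using distance_regular unfolding distance_regular_def graph_diameter_def by auto
  then show ?thesis using dist_geodesic_point[of x y i] assms by auto
qed

lemma c_pos: assumes "1 \<le> j" "j \<le> D" shows "1 \<le> c j"
proof -
  obtain x y where xy: "x \<in> X" "y \<in> X" "d x y = j" using ex_dist assms(2) by blast
  then obtain z where z: "z \<in> X" "d x z = j - 1" "d z y = 1"
    using dist_geodesic_point[of x y "j - 1"] assms(1) by auto
  then have "z \<in> {z\<in>X. Adj y z \<and> d x z = d x y - 1}"
    using xy dist_eq_1_iff dist_commute by auto
  then have "card {z\<in>X. Adj y z \<and> d x z = d x y - 1} \<noteq> 0" using finite_X by auto
  then show ?thesis using card_c[OF xy(1,2)] xy(3) assms(1) by simp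
qed

lemma b_pos: assumes "j < D" shows "1 \<le> b j"
proof -
  obtain x y where xy: "x \<in> X" "y \<in> X" "d x y = Suc j" using ex_dist[of "Suc j"] assms by auto
  then obtain z where z: "z \<in> X" "d x z = j" "d z y = 1"
    using dist_geodesic_point[of x y j] by auto
  then have "y \<in> {t\<in>X. Adj z t \<and> d x t = d x z + 1}"
    using xy dist_eq_1_iff by auto
  then have "card {t\<in>X. Adj z t \<and> d x t = d x z + 1} \<noteq> 0" using finite_X by auto
  then show ?thesis using card_b[OF xy(1) z(1)] z(2) assms by simp
qed

text \<open>The intersection numbers, cut off outside their range (so that \<open>ci 0 = bi D = 0\<close>);
\<open>bi 0\<close> is the valency.\<close>
definition bi :: "nat \<Rightarrow> nat" where "bi j = (if j < D then b j else 0)"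
definition ci :: "nat \<Rightarrow> nat" where "ci j = (if 1 \<le> j \<and> j \<le> D then c j else 0)"
definition ai :: "nat \<Rightarrow> nat" where "ai j = bi 0 - bi j - ci j"

lemma card_nbr: assumes "u \<in> X" shows "card (nbr u) = bi 0"
proof (cases "D = 0")
  case True
  then have "nbr u = {}"
    using dist_le_diam[OF assms] dist_eq_1_iff[OF assms] by fastforce
  then have "card (nbr u) = 0" by (metis card.empty)
  then show ?thesis using True unfolding bi_def by simp
next
  case False
  have "nbr u = {z\<in>X. Adj u z \<and> d u z = d u u + 1}"
    using dist_self[OF assms] dist_eq_1_iff[OF assms] by auto
  then show ?thesis using card_b[OF assms assms] dist_self[OF assms] False by (simp add: bi_def)
qed

lemma card_nbr_closer:
  assumes u: "u \<in> X" and v: "v \<in> X" and i: "i + 1 = d v u"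
  shows "card {m\<in>X. Adj u m \<and> d v m = i} = ci (d v u)"
proof -
  have "d v u - 1 = i" "1 \<le> d v u" using i by auto
  then show ?thesis using card_c[OF v u, unfolded \<open>d v u - 1 = i\<close>] dist_le_diam[OF v u]
    unfolding ci_def by simp
qed

lemma card_nbr_farther:
  assumes u: "u \<in> X" and v: "v \<in> X" and i: "i = d v u + 1"
  shows "card {m\<in>X. Adj u m \<and> d v m = i} = bi (d v u)"
proof (cases "d v u < D")
  case True
  then show ?thesis using card_b[OF v u] i unfolding bi_def by auto
next
  case False
  then have "{m\<in>X. Adj u m \<and> d v m = i} = {}" using i dist_le_diam[OF v] by fastforce
  then show ?thesis using False unfolding bi_def by (simp only: card.empty if_False)
qed

lemma card_nbr_same:
  assumes u: "u \<in> X" and v: "v \<in> X"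
  shows "card {m\<in>X. Adj u m \<and> d v m = d v u} = ai (d v u)"
proof -
  define j where "j = d v u"
  define S where "S i = {m\<in>X. Adj u m \<and> d v m = i}" for i
  show ?thesis
  proof (cases "j = 0")
    case True
    then have "S j = {}"
      using dist_eq_0_iff u v adj_irrefl unfolding S_def j_def by fastforce
    then have "card (S j) = 0" by simp
    then show ?thesis using True unfolding ai_def ci_def S_def j_def by simp
  next
    case False
    have "nbr u = S (j - 1) \<union> S j \<union> S (j + 1)"
    proof
      show "nbr u \<subseteq> S (j - 1) \<union> S j \<union> S (j + 1)"
      proof
        fix m assume m: "m \<in> nbr u"
        then have "d v m = j - 1 \<or> d v m = j \<or> d v m = j + 1"
          using dist_adj[of u m v] v False unfolding j_def by auto
        then show "m \<in> S (j - 1) \<union> S j \<union> S (j + 1)" using m unfolding S_def by auto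
      qed
    qed (auto simp: S_def)
    moreover have "S (j - 1) \<inter> S j = {}" "(S (j - 1) \<union> S j) \<inter> S (j + 1) = {}"
      using False unfolding S_def by auto
    moreover have "finite (S i)" for i unfolding S_def using finite_X by simp
    ultimately have "card (nbr u) = card (S (j - 1)) + card (S j) + card (S (j + 1))"
      by (simp add: card_Un_disjoint)
    then show ?thesis
      using card_nbr[OF u] card_nbr_closer[OF u v, of "j - 1"] card_nbr_farther[OF u v, of "j + 1"] False
      unfolding ai_def S_def j_def by simp
  qed
qed

lemma card_nbr_dist:
  assumes u: "u \<in> X" and v: "v \<in> X"
  shows "card {m\<in>X. Adj u m \<and> d v m = i} =
    (if i + 1 = d v u then ci (d v u) else if i = d v u then ai (d v u)
     else if i = d v u + 1 then bi (d v u) else 0)"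
proof -
  have "card {m\<in>X. Adj u m \<and> d v m = i} = 0" if "\<not> (i + 1 = d v u \<or> i = d v u \<or> i = d v u + 1)"
  proof -
    have "{m\<in>X. Adj u m \<and> d v m = i} = {}" using dist_adj[of u _ v] v that by fastforce
    then show ?thesis by (simp only: card.empty)
  qed
  then show ?thesis
    using card_nbr_closer[OF u v] card_nbr_same[OF u v] card_nbr_farther[OF u v] by auto
qed

lemma sum_nbr_dist:
  fixes f :: "nat \<Rightarrow> 'b::comm_ring_1"
  assumes u: "u \<in> X" and v: "v \<in> X"
  shows "(\<Sum>m\<in>nbr u. f (d v m)) =
    of_nat (ci (d v u)) * f (d v u - 1) + of_nat (ai (d v u)) * f (d v u) + of_nat (bi (d v u)) * f (d v u + 1)"
proof -
  define j where "j = d v u"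
  have "d v ` nbr u \<subseteq> {j - 1, j, j + 1}"
    using dist_adj v unfolding j_def by fastforce
  then have "(\<Sum>m\<in>nbr u. f (d v m)) = (\<Sum>i\<in>{j - 1, j, j + 1}. \<Sum>m\<in>{m\<in>nbr u. d v m = i}. f (d v m))"
    using finite_X by (intro sum.group[symmetric]) auto
  also have "\<dots> = (\<Sum>i\<in>{j - 1, j, j + 1}. of_nat (card {m\<in>X. Adj u m \<and> d v m = i}) * f i)"
  proof (intro sum.cong refl)
    fix i
    have "{m\<in>nbr u. d v m = i} = {m\<in>X. Adj u m \<and> d v m = i}" by auto
    then show "(\<Sum>m\<in>{m\<in>nbr u. d v m = i}. f (d v m)) = of_nat (card {m\<in>X. Adj u m \<and> d v m = i}) * f i"
      by simp
  qed
  also have "\<dots> = of_nat (ci j) * f (j - 1) + of_nat (ai j) * f j + of_nat (bi j) * f (j + 1)"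
  proof (cases "j = 0")
    case True
    then show ?thesis unfolding card_nbr_dist[OF u v] j_def[symmetric] by (simp add: ai_def ci_def)
  next
    case False
    then have "j - 1 \<notin> {j, j + 1}" by auto
    then show ?thesis using False unfolding card_nbr_dist[OF u v] j_def[symmetric] by simp
  qed
  finally show ?thesis unfolding j_def .
qed

lemma sum_if_eq_sum_filter: "(\<Sum>m\<in>X. if P m then g m else 0) = (\<Sum>m\<in>{m\<in>X. P m}. g m)"
  using finite_X by (simp add: sum.inter_filter)

lemma sum_nbr_sphere:
  fixes \<phi> :: "'a \<Rightarrow> 'b::comm_ring_1"
  assumes u: "u \<in> X"
  shows "(\<Sum>m\<in>nbr u. \<Sum>m'\<in>sphere m i. \<phi> m') =
    of_nat (ci (i + 1)) * (\<Sum>m'\<in>sphere u (i + 1). \<phi> m') + of_nat (ai i) * (\<Sum>m'\<in>sphere u i. \<phi> m')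
    + (if 1 \<le> i then of_nat (bi (i - 1)) * (\<Sum>m'\<in>sphere u (i - 1). \<phi> m') else 0)"
proof -
  have "(\<Sum>m\<in>nbr u. \<Sum>m'\<in>sphere m i. \<phi> m') = (\<Sum>m'\<in>X. \<Sum>m\<in>nbr u. if d m' m = i then \<phi> m' else 0)"
    using dist_commute adj_in_X
    by (subst sum.swap) (auto simp: sum_if_eq_sum_filter[symmetric] intro!: sum.cong)
  also have "\<dots> = (\<Sum>m'\<in>X. of_nat (card {m\<in>X. Adj u m \<and> d m' m = i}) * \<phi> m')"
  proof (intro sum.cong refl)
    fix m'
    have "{m\<in>nbr u. d m' m = i} = {m\<in>X. Adj u m \<and> d m' m = i}" by auto
    then show "(\<Sum>m\<in>nbr u. if d m' m = i then \<phi> m' else 0) =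
        of_nat (card {m\<in>X. Adj u m \<and> d m' m = i}) * \<phi> m'"
      using finite_X by (simp add: sum.inter_filter[symmetric])
  qed
  also have "\<dots> = (\<Sum>m'\<in>X. (if d u m' = i + 1 then of_nat (ci (i + 1)) * \<phi> m' else 0)
      + (if d u m' = i then of_nat (ai i) * \<phi> m' else 0)
      + (if d u m' + 1 = i then of_nat (bi (i - 1)) * \<phi> m' else 0))"
    using card_nbr_dist[OF u] dist_commute[OF u] by (intro sum.cong refl) auto
  also have "\<dots> = of_nat (ci (i + 1)) * (\<Sum>m'\<in>sphere u (i + 1). \<phi> m') + of_nat (ai i) * (\<Sum>m'\<in>sphere u i. \<phi> m')
      + of_nat (bi (i - 1)) * (\<Sum>m'\<in>{m'\<in>X. d u m' + 1 = i}. \<phi> m')"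
    by (simp only: sum.distrib sum_if_eq_sum_filter) (simp add: sum_distrib_left)
  also have "{m'\<in>X. d u m' + 1 = i} = (if 1 \<le> i then sphere u (i - 1) else {})"
    by auto
  finally show ?thesis by simp
qed

definition cosine_seq :: "real \<Rightarrow> (nat \<Rightarrow> real) \<Rightarrow> bool" where
  "cosine_seq \<theta> \<omega> \<longleftrightarrow> \<omega> 0 \<noteq> 0 \<and>
     (\<forall>j\<le>D. of_nat (ci j) * \<omega> (j - 1) + of_nat (ai j) * \<omega> j + of_nat (bi j) * \<omega> (j + 1) = \<theta> * \<omega> j)"

text \<open>\<open>sphere_coeff \<theta> i\<close> is the value at \<open>\<theta>\<close> of the polynomial \<open>v\<^sub>i\<close> with \<open>A\<^sub>i = v\<^sub>i(A)\<close>.\<close>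
fun sphere_coeff :: "real \<Rightarrow> nat \<Rightarrow> real" where
  "sphere_coeff \<theta> 0 = 1"
| "sphere_coeff \<theta> (Suc 0) = \<theta>"
| "sphere_coeff \<theta> (Suc (Suc i)) =
     (\<theta> * sphere_coeff \<theta> (Suc i) - of_nat (ai (Suc i)) * sphere_coeff \<theta> (Suc i)
      - of_nat (bi i) * sphere_coeff \<theta> i) / of_nat (ci (Suc (Suc i)))"

lemma sum_nbr_cosine:
  assumes \<omega>: "cosine_seq \<theta> \<omega>" and u: "u \<in> X" and v: "v \<in> X"
  shows "(\<Sum>m\<in>nbr u. \<omega> (d m v)) = \<theta> * \<omega> (d u v)"
proof -
  have "(\<Sum>m\<in>nbr u. \<omega> (d m v)) = (\<Sum>m\<in>nbr u. \<omega> (d v m))"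
    using dist_commute v by (intro sum.cong) auto
  also have "\<dots> = \<theta> * \<omega> (d v u)"
    using sum_nbr_dist[OF u v, of \<omega>] \<omega> dist_le_diam[OF v u] unfolding cosine_seq_def by simp
  finally show ?thesis using dist_commute[OF u v] by simp
qed

lemma sum_sphere_cosine:
  assumes \<omega>: "cosine_seq \<theta> \<omega>" and "i \<le> D" and u: "u \<in> X" and v: "v \<in> X"
  shows "(\<Sum>m\<in>sphere u i. \<omega> (d m v)) = sphere_coeff \<theta> i * \<omega> (d u v)"
  using assms(2) u v
proof (induction i arbitrary: u v rule: less_induct)
  case (less i)
  consider "i = 0" | "i = 1" | k where "i = Suc (Suc k)"
    by (metis One_nat_def not0_implies_Suc)
  then show ?case
  proof cases
    case 1
    then have "sphere u i = {u}" using dist_eq_0_iff less.prems by auto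
    then show ?thesis using 1 by simp
  next
    case 2
    then have "sphere u i = nbr u" using dist_eq_1_iff less.prems by auto
    then show ?thesis using 2 sum_nbr_cosine[OF \<omega> less.prems(2,3)] by simp
  next
    case 3
    have IH: "(\<Sum>m\<in>sphere u' j. \<omega> (d m v)) = sphere_coeff \<theta> j * \<omega> (d u' v)"
      if "j < i" "u' \<in> X" for j u'
      using less.IH[OF that(1) _ that(2) less.prems(3)] that(1) less.prems(1) by simp
    have "(\<Sum>m\<in>nbr u. \<Sum>m'\<in>sphere m (Suc k). \<omega> (d m' v)) =
        (\<Sum>m\<in>nbr u. sphere_coeff \<theta> (Suc k) * \<omega> (d m v))"
      using IH 3 by (intro sum.cong) auto
    also have "\<dots> = sphere_coeff \<theta> (Suc k) * (\<theta> * \<omega> (d u v))"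
      using sum_nbr_cosine[OF \<omega> less.prems(2,3)] by (simp add: sum_distrib_left[symmetric])
    finally have "of_nat (ci i) * (\<Sum>m\<in>sphere u i. \<omega> (d m v)) =
        sphere_coeff \<theta> (Suc k) * (\<theta> * \<omega> (d u v)) - of_nat (ai (Suc k)) * (sphere_coeff \<theta> (Suc k) * \<omega> (d u v))
        - of_nat (bi k) * (sphere_coeff \<theta> k * \<omega> (d u v))"
      using sum_nbr_sphere[OF less.prems(2), where i = "Suc k" and \<phi> = "\<lambda>m. \<omega> (d m v)"] IH[of "Suc k" u] IH[of k u] less.prems(2) 3
      by simp
    moreover have "ci i \<noteq> 0" using c_pos[of i] less.prems(1) 3 by (simp add: ci_def)
    ultimately show ?thesis using 3 by (simp add: field_simps)
  qed
qed

definition cosine_norm :: "real \<Rightarrow> (nat \<Rightarrow> real) \<Rightarrow> real" where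
  "cosine_norm \<theta> \<omega> = (\<Sum>i\<le>D. \<omega> i * sphere_coeff \<theta> i)"

lemma cosine_matrix_square:
  assumes \<omega>: "cosine_seq \<theta> \<omega>" and u: "u \<in> X" and v: "v \<in> X"
  shows "(\<Sum>m\<in>X. \<omega> (d u m) * \<omega> (d m v)) = cosine_norm \<theta> \<omega> * \<omega> (d u v)"
proof -
  have "(\<Sum>m\<in>X. \<omega> (d u m) * \<omega> (d m v)) = (\<Sum>i\<le>D. \<Sum>m\<in>sphere u i. \<omega> (d u m) * \<omega> (d m v))"
    using dist_le_diam[OF u] finite_X by (intro sum.group[symmetric]) auto
  also have "\<dots> = (\<Sum>i\<le>D. \<omega> i * (\<Sum>m\<in>sphere u i. \<omega> (d m v)))"
    by (intro sum.cong) (auto simp: sum_distrib_left)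
  also have "\<dots> = (\<Sum>i\<le>D. \<omega> i * (sphere_coeff \<theta> i * \<omega> (d u v)))"
    using sum_sphere_cosine[OF \<omega> _ u v] by (intro sum.cong) auto
  finally show ?thesis unfolding cosine_norm_def by (simp add: sum_distrib_right mult.assoc)
qed

lemma cosine_norm_nonzero:
  assumes \<omega>: "cosine_seq \<theta> \<omega>" and u: "u \<in> X"
  shows "cosine_norm \<theta> \<omega> \<noteq> 0"
proof
  assume "cosine_norm \<theta> \<omega> = 0"
  then have "(\<Sum>m\<in>X. \<omega> (d u m) * \<omega> (d u m)) = 0"
    using cosine_matrix_square[OF \<omega> u u] dist_commute[OF u] by (simp cong: sum.cong)
  then have "\<omega> (d u u) * \<omega> (d u u) = 0"
    using finite_X u by (simp add: sum_nonneg_eq_0_iff)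
  then show False using \<omega> dist_self[OF u] unfolding cosine_seq_def by simp
qed


lemma ci_ai_bi_sum: assumes "j \<le> D" shows "ci j + ai j + bi j = bi 0"
proof -
  obtain v u where vu: "v \<in> X" "u \<in> X" "d v u = j" using ex_dist[OF assms] by blast
  have "int (card (nbr u)) = (\<Sum>m\<in>nbr u. (\<lambda>_. 1::int) (d v m))" by simp
  also have "\<dots> = int (ci j) + int (ai j) + int (bi j)"
    using sum_nbr_dist[OF vu(2,1), of "\<lambda>_. 1::int"] vu(3) by simp
  finally show ?thesis using card_nbr[OF vu(2)] by linarith
qed

lemma sum_nbr_nbr:
  "(\<Sum>m\<in>nbr y. \<Sum>t\<in>nbr m. g t) = (\<Sum>t\<in>X. of_nat (card {m\<in>X. Adj y m \<and> Adj m t}) * g t)"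
proof -
  have "(\<Sum>m\<in>nbr y. \<Sum>t\<in>nbr m. g t) = (\<Sum>t\<in>X. \<Sum>m\<in>{m\<in>nbr y. Adj m t}. g t)"
    using finite_X by (simp add: sum.swap_restrict)
  also have "\<dots> = (\<Sum>t\<in>X. of_nat (card {m\<in>X. Adj y m \<and> Adj m t}) * g t)"
    by (intro sum.cong refl) (simp add: conj_assoc)
  finally show ?thesis .
qed

lemma adj_adj_dual_idem:
  assumes x: "x \<in> X" and y: "y \<in> X" and j: "d x y + 2 = j"
  shows "mat_vec X (adj_mat X Adj) (mat_vec X (adj_mat X Adj) (mat_vec X (dual_idem X Adj x j) w)) y
    = of_nat (ci 2) * (\<Sum>t\<in>{t\<in>sphere x j. d y t = 2}. w t)"
proof -
  define g where "g = mat_vec X (dual_idem X Adj x j) w"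
  have common: "card {m\<in>X. Adj y m \<and> Adj m t} = (if d y t = 2 then ci 2 else 0)"
    if t: "t \<in> X" "d x t = j" for t
  proof -
    have "j \<le> d x y + d y t" using dist_triangle[OF x y t(1)] t(2) by simp
    then have "2 \<le> d t y" using j dist_commute[OF y t(1)] by simp
    moreover have "{m\<in>X. Adj y m \<and> Adj m t} = {m\<in>X. Adj t m \<and> d y m = 1}"
      using dist_eq_1_iff y adj_sym by auto
    ultimately show ?thesis
      using card_nbr_dist[OF t(1) y, of 1] dist_commute[OF y t(1)] by auto
  qed
  have "mat_vec X (adj_mat X Adj) (mat_vec X (adj_mat X Adj) g) y = (\<Sum>m\<in>nbr y. \<Sum>t\<in>nbr m. g t)"
    using y by (simp add: mat_vec_adj_mat[OF finite_X])
  also have "\<dots> = (\<Sum>t\<in>X. of_nat (card {m\<in>X. Adj y m \<and> Adj m t}) * g t)"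
    by (rule sum_nbr_nbr)
  also have "\<dots> = (\<Sum>t\<in>X. if d x t = j \<and> d y t = 2 then of_nat (ci 2) * w t else 0)"
    using common by (intro sum.cong refl) (simp add: g_def mat_vec_dual_idem[OF finite_X])
  also have "\<dots> = of_nat (ci 2) * (\<Sum>t\<in>{t\<in>sphere x j. d y t = 2}. w t)"
    by (simp add: sum_if_eq_sum_filter sum_distrib_left conj_assoc)
  finally show ?thesis unfolding g_def .
qed

end

section \<open>Antipodal distance-regular graphs\<close>

locale antipodal_drg = drg +
  assumes double_cover: "antipodal_double_cover X Adj D"
begin

definition antipode :: "'a \<Rightarrow> 'a" where "antipode u = (THE y. y \<in> X \<and> d u y = D)"

lemma ex1_antipode: assumes "u \<in> X" shows "\<exists>!y. y \<in> X \<and> d u y = D"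
proof -
  have "card {y\<in>X. d u y = D} = 1"
    using double_cover assms unfolding antipodal_double_cover_def by auto
  then obtain y where y: "{y\<in>X. d u y = D} = {y}" using card_1_singletonE by blast
  then have "y \<in> X \<and> d u y = D" by auto
  moreover have "z = y" if "z \<in> X" "d u z = D" for z using y that by auto
  ultimately show ?thesis by blast
qed

lemma antipode: assumes "u \<in> X" shows "antipode u \<in> X" "d u (antipode u) = D"
  using theI'[OF ex1_antipode[OF assms]] unfolding antipode_def by auto

lemma antipode_unique: "u \<in> X \<Longrightarrow> y \<in> X \<Longrightarrow> d u y = D \<Longrightarrow> y = antipode u"
  using ex1_antipode antipode by blast

lemma geodesic_extension:
  assumes u: "u \<in> X" and v: "v \<in> X" and "d u v + n \<le> D"
  shows "\<exists>w\<in>X. d u w = d u v + n \<and> d v w \<le> n"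
  using assms(3)
proof (induction n)
  case 0
  then show ?case using v dist_self[OF v] by auto
next
  case (Suc n)
  then obtain w where w: "w \<in> X" "d u w = d u v + n" "d v w \<le> n" by auto
  then have "card {m\<in>X. Adj w m \<and> d u m = d u w + 1} \<noteq> 0"
    using card_b[OF u w(1)] b_pos[of "d u w"] Suc.prems by simp
  then obtain m where m: "m \<in> X" "Adj w m" "d u m = d u w + 1"
    by (metis (mono_tags, lifting) card.empty empty_Collect_eq)
  then show ?case using dist_adj[OF m(2) v] w by auto
qed

lemma dist_antipode: assumes u: "u \<in> X" and v: "v \<in> X" shows "d u v + d v (antipode u) = D"
proof -
  obtain w where w: "w \<in> X" "d u w = D" "d v w \<le> D - d u v"
    using geodesic_extension[OF u v, of "D - d u v"] dist_le_diam[OF u v] by auto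
  then have "w = antipode u" using antipode_unique[OF u] by blast
  then show ?thesis
    using w dist_triangle[OF u v antipode(1)[OF u]] antipode(2)[OF u] dist_le_diam[OF u v] by auto
qed

lemma T_module_vanishes_at_antipode:
  assumes D: "0 < D" "D \<le> 4" and x: "x \<in> X" and W: "T_module X Adj x W"
    and vanish: "\<And>w t. w \<in> W \<Longrightarrow> t \<in> X \<Longrightarrow> d x t = D - 1 \<Longrightarrow> w t = 0"
    and w: "w \<in> W"
  shows "w (antipode x) = 0"
proof -
  define z where "z = antipode x"
  have z: "z \<in> X" "d x z = D" using antipode[OF x] unfolding z_def by auto
  have "card (nbr z) \<noteq> 0" using card_nbr[OF z(1)] b_pos[OF D(1)] D(1) by (simp add: bi_def)
  then obtain v where v: "v \<in> X" "Adj z v" by (metis (mono_tags, lifting) card.empty empty_Collect_eq)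
  have v_sphere: "d x v = D - 1"
    using dist_antipode[OF x v(1)] dist_eq_1_iff[OF v(1) z(1)] adj_sym[OF v(2)] unfolding z_def[symmetric] by simp
  have "mat_vec X (adj_mat X Adj) (mat_vec X (dual_idem X Adj x D) w) \<in> W"
    by (rule T_module_adj_mat[OF W T_module_dual_idem[OF W D(2) w]])
  from vanish[OF this v(1) v_sphere]
  have "(\<Sum>m\<in>nbr v. if d x m = D then w m else 0) = 0"
    using v(1) unfolding mat_vec_adj_mat[OF finite_X] mat_vec_dual_idem[OF finite_X] by simp
  moreover have "{m\<in>nbr v. d x m = D} = {z}"
  proof (intro equalityI subsetI)
    fix m assume "m \<in> {m\<in>nbr v. d x m = D}"
    then show "m \<in> {z}" using antipode_unique[OF x] unfolding z_def by blast
  next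
    fix m assume "m \<in> {z}"
    then show "m \<in> {m\<in>nbr v. d x m = D}" using z adj_sym[OF v(2)] by blast
  qed
  moreover have "(\<Sum>m\<in>nbr v. if d x m = D then w m else 0) = (\<Sum>m\<in>{m\<in>nbr v. d x m = D}. w m)"
    using finite_X by (intro sum.inter_filter[symmetric]) simp
  ultimately show ?thesis unfolding z_def by simp
qed

end

section \<open>The graphs \<open>AT4(p, q, 2)\<close>\<close>

lemma all_le_4_iff: "(\<forall>j\<le>4. P j) \<longleftrightarrow> P 0 \<and> P 1 \<and> P 2 \<and> P 3 \<and> P (4::nat)"
  by (auto simp: le_Suc_eq numeral_eq_Suc)

locale at4 = antipodal_drg X Adj 4 b c for X :: "'a set" and Adj b c +
  fixes p q :: nat
  assumes p: "1 \<le> p" and q: "2 \<le> q"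
    and b0: "b 0 = q * (p * q + p + q)" and b1: "b 1 = (q\<^sup>2 - 1) * (p + 1)"
    and b2: "2 * b 2 = q * (p + q)" and b3: "b 3 = 1"
    and c1: "c 1 = 1" and c2: "2 * c 2 = q * (p + q)"
    and c3: "c 3 = (q\<^sup>2 - 1) * (p + 1)" and c4: "c 4 = q * (p * q + p + q)"
begin

abbreviation "P \<equiv> real p"
abbreviation "Q \<equiv> real q"
abbreviation "S \<equiv> P * Q + P + Q"

lemma PQS_bounds: "1 \<le> P" "2 \<le> Q" "0 < S"
  using p q by (simp_all add: add_pos_nonneg)

lemma real_bi:
  "real (bi 0) = Q * S" "real (bi 1) = (Q\<^sup>2 - 1) * (P + 1)" "real (bi 2) = Q * (P + Q) / 2"
  "real (bi 3) = 1" "real (bi 4) = 0"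
proof -
  have "real (q\<^sup>2 - 1) = Q\<^sup>2 - 1" using q by (simp add: of_nat_diff)
  moreover have "bi 1 = b 1" by (simp add: bi_def)
  then have "real (bi 1) = real (q\<^sup>2 - 1) * real (p + 1)" unfolding b1 by (simp only: of_nat_mult)
  ultimately show "real (bi 1) = (Q\<^sup>2 - 1) * (P + 1)" by simp
  show "real (bi 2) = Q * (P + Q) / 2" using arg_cong[OF b2, of real] by (simp add: bi_def)
qed (simp_all add: bi_def b0 b3)

lemma real_ci:
  "real (ci 0) = 0" "real (ci 1) = 1" "real (ci 2) = Q * (P + Q) / 2"
  "real (ci 3) = (Q\<^sup>2 - 1) * (P + 1)" "real (ci 4) = Q * S"
proof -
  have "real (q\<^sup>2 - 1) = Q\<^sup>2 - 1" using q by (simp add: of_nat_diff)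
  moreover have "ci 3 = c 3" by (simp add: ci_def)
  then have "real (ci 3) = real (q\<^sup>2 - 1) * real (p + 1)" unfolding c3 by (simp only: of_nat_mult)
  ultimately show "real (ci 3) = (Q\<^sup>2 - 1) * (P + 1)" by simp
  show "real (ci 2) = Q * (P + Q) / 2" using arg_cong[OF c2, of real] by (simp add: ci_def)
  have "ci 1 = c 1" by (simp add: ci_def)
  then show "real (ci 1) = 1" unfolding c1 by simp
qed (simp_all add: ci_def c4)

lemma real_ai:
  "real (ai 0) = 0" "real (ai 1) = P * (Q + 1)" "real (ai 2) = P * Q\<^sup>2"
  "real (ai 3) = P * (Q + 1)" "real (ai 4) = 0"
proof -
  have ai: "real (ai j) = real (bi 0) - real (ci j) - real (bi j)" if "j \<le> 4" for j
    using arg_cong[OF ci_ai_bi_sum[OF that], of real] by simp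
  show "real (ai 0) = 0" "real (ai 1) = P * (Q + 1)" "real (ai 2) = P * Q\<^sup>2"
    "real (ai 3) = P * (Q + 1)" "real (ai 4) = 0"
    by (simp_all add: ai real_bi real_ci algebra_simps power2_eq_square del: One_nat_def)
qed

text \<open>The cosine sequences of the eigenvalues \<open>\<theta>\<^sub>1 = pq + p + q\<close> and \<open>\<theta>\<^sub>4 = -q\<^sup>2\<close>,
scaled to have polynomial entries.\<close>
definition omega1 :: "nat \<Rightarrow> real" where
  "omega1 i = (if i = 0 then Q else if i = 1 then 1 else if i = 2 then 0 else if i = 3 then -1 else -Q)"

definition omega4 :: "nat \<Rightarrow> real" where
  "omega4 i = (if i = 0 \<or> i = 4 then S * (P + 1) else if i = 1 \<or> i = 3 then - Q * (P + 1) else P + Q)"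

lemma cosine_seq_omega1: "cosine_seq S omega1"
  unfolding cosine_seq_def all_le_4_iff using PQS_bounds
  by (simp add: omega1_def real_bi real_ci real_ai field_simps power2_eq_square del: One_nat_def)

lemma cosine_seq_omega4: "cosine_seq (- Q\<^sup>2) omega4"
proof -
  have "omega4 0 \<noteq> 0" using PQS_bounds by (simp add: omega4_def)
  then show ?thesis
    unfolding cosine_seq_def all_le_4_iff
    by (simp add: omega4_def real_bi real_ci real_ai field_simps power2_eq_square del: One_nat_def)
qed

lemma dist_in_local_graph:
  assumes z: "z \<in> X" and w: "w \<in> nbr z" and w': "w' \<in> nbr z"
  shows "d w w' = (if w = w' then 0 else if Adj w w' then 1 else 2)"
proof -
  have "d w z = 1" "d z w' = 1" using dist_eq_1_iff dist_commute z w w' adj_sym by auto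
  then have "d w w' \<le> 2" using dist_triangle[of w z w'] z w w' by simp
  then show ?thesis using dist_eq_0_iff[of w w'] dist_eq_1_iff[of w w'] w w' by auto
qed

lemma sum_local_dist:
  fixes f :: "nat \<Rightarrow> real"
  assumes z: "z \<in> X" and w: "w \<in> nbr z"
  shows "(\<Sum>m\<in>nbr z. f (d w m)) = f 0 + P * (Q + 1) * f 1 + (Q\<^sup>2 - 1) * (P + 1) * f 2"
proof -
  have "d w z = 1" using dist_eq_1_iff dist_commute z w adj_sym by auto
  from sum_nbr_dist[OF z, of w f, unfolded this] show ?thesis
    using w unfolding real_ci real_ai real_bi by (simp add: numeral_2_eq_2)
qed

text \<open>The trace hypothesis of \<open>centered_product_vanishes\<close> for the local graph is a polynomial
identity in \<open>p\<close> and \<open>q\<close>; this is where tightness enters.\<close>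
lemma local_balanced:
  assumes z: "z \<in> X" and w1: "w1 \<in> nbr z" and w2: "w2 \<in> nbr z"
  shows "(\<Sum>w\<in>nbr z. (omega4 (d w1 w) - (P + 1) * Q\<^sup>2 / S) * (omega1 (d w w2) - 1 / Q)) = 0"
proof -
  define K where "K = real (card (nbr z))"
  have K: "K = Q * S" unfolding K_def card_nbr[OF z] real_bi ..
  have Q0: "Q \<noteq> 0" and S0: "S \<noteq> 0" using PQS_bounds by auto
  then have K0: "K \<noteq> 0" unfolding K by simp
  have \<rho>: "(P + 1) * Q ^ 3 / K = (P + 1) * Q\<^sup>2 / S"
    unfolding K using Q0 by (simp add: power2_eq_square power3_eq_cube)
  have \<rho>': "S / K = 1 / Q" unfolding K using S0 by simp
  have rows4: "(\<Sum>m\<in>nbr z. omega4 (d w m)) = (P + 1) * Q ^ 3" if "w \<in> nbr z" for w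
    unfolding sum_local_dist[OF z that] by (simp add: omega4_def algebra_simps power2_eq_square power3_eq_cube)
  have rows1: "(\<Sum>m\<in>nbr z. omega1 (d w m)) = S" if "w \<in> nbr z" for w
    unfolding sum_local_dist[OF z that] by (simp add: omega1_def algebra_simps)
  define h where "h i = (omega4 i - (P + 1) * Q\<^sup>2 / S) * (omega1 i - 1 / Q)" for i
  have h: "h i = ((omega4 i * S - (P + 1) * Q\<^sup>2) * (omega1 i * Q - 1)) / (S * Q)" for i
    unfolding h_def using Q0 S0 by (simp add: field_simps)
  have "(omega4 0 * S - (P + 1) * Q\<^sup>2) * (omega1 0 * Q - 1)
      + P * (Q + 1) * ((omega4 1 * S - (P + 1) * Q\<^sup>2) * (omega1 1 * Q - 1))
      + (Q\<^sup>2 - 1) * (P + 1) * ((omega4 2 * S - (P + 1) * Q\<^sup>2) * (omega1 2 * Q - 1)) = 0"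
    unfolding omega4_def omega1_def by (simp add: algebra_simps power2_eq_square)
  then have "h 0 + P * (Q + 1) * h 1 + (Q\<^sup>2 - 1) * (P + 1) * h 2 = 0"
    unfolding h times_divide_eq_right add_divide_distrib[symmetric] by simp
  then have "(\<Sum>w'\<in>nbr z. h (d w w')) = 0" if "w \<in> nbr z" for w
    using sum_local_dist[OF z that, of h] by simp
  then have trace: "(\<Sum>w\<in>nbr z. \<Sum>w'\<in>nbr z.
      (omega4 (d w w') - (P + 1) * Q ^ 3 / K) * (omega1 (d w w') - S / K)) = 0"
    unfolding \<rho> \<rho>' h_def by simp
  have "(\<Sum>w\<in>nbr z. (omega4 (d w1 w) - (P + 1) * Q ^ 3 / K) * (omega1 (d w w2) - S / K)) = 0"
    by (rule centered_product_vanishes[OF finite_X _ K_def K0 _ _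
          cosine_matrix_square[OF cosine_seq_omega4] cosine_matrix_square[OF cosine_seq_omega1]
          rows4 rows1 trace cosine_norm_nonzero[OF cosine_seq_omega4 z]
          cosine_norm_nonzero[OF cosine_seq_omega1 z] w1 w2])
      (auto simp: dist_commute)
  then show ?thesis unfolding \<rho> \<rho>' .
qed

lemma local_common_neighbours:
  assumes z: "z \<in> X" and w1: "w1 \<in> nbr z" and w2: "w2 \<in> nbr z"
  shows "real (card {w\<in>nbr z. Adj w1 w \<and> Adj w w2}) =
    (if w1 = w2 then P * (Q + 1) else if Adj w1 w2 then 2 * P - Q else P)"
proof -
  define c where "c = (P + 1) * Q\<^sup>2 / S"
  define B where "B w = omega1 (d w w2) - 1 / Q" for w
  define N1 where "N1 = {w\<in>nbr z. Adj w1 w}"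
  define N2 where "N2 = {w\<in>nbr z. w \<noteq> w1 \<and> \<not> Adj w1 w}"
  define T1 where "T1 = (\<Sum>w\<in>N1. B w)"
  define T2 where "T2 = (\<Sum>w\<in>N2. B w)"
  have Q0: "Q \<noteq> 0" using PQS_bounds by simp
  have B: "B w = (if w = w2 then Q else if Adj w w2 then 1 else 0) - 1 / Q" if "w \<in> nbr z" for w
    using dist_in_local_graph[OF z that w2] unfolding B_def omega1_def by auto
  have split: "(\<Sum>w\<in>nbr z. f w) = f w1 + (\<Sum>w\<in>N1. f w) + (\<Sum>w\<in>N2. f w)" for f :: "'a \<Rightarrow> real"
    unfolding N1_def N2_def using finite_X w1 adj_irrefl
    by (intro sum_split_neighbours[where R = Adj]) auto
  have card_N1: "real (card N1) = P * (Q + 1)"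
  proof -
    have "N1 = {m\<in>X. Adj z m \<and> d w1 m = 1}" unfolding N1_def using dist_eq_1_iff w1 by auto
    moreover have "d w1 z = 1" using dist_eq_1_iff dist_commute z w1 adj_sym by auto
    ultimately show ?thesis using card_nbr_dist[OF z, of w1 1] w1 real_ai(2) by simp
  qed
  have "(\<Sum>w\<in>nbr z. omega1 (d w w2)) = (\<Sum>w\<in>nbr z. omega1 (d w2 w))"
    using dist_commute w2 by (intro sum.cong) auto
  also have "\<dots> = S" unfolding sum_local_dist[OF z w2] by (simp add: omega1_def algebra_simps)
  finally have "(\<Sum>w\<in>nbr z. B w) = 0"
    using card_nbr[OF z] real_bi(1) Q0 by (simp add: B_def sum_subtractf)
  then have T2: "T2 = - B w1 - T1" unfolding split T1_def T2_def by simp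
  have "(\<Sum>w\<in>nbr z. (omega4 (d w1 w) - c) * B w) = 0"
    using local_balanced[OF z w1 w2] unfolding c_def B_def .
  moreover have "(\<Sum>w\<in>N1. (omega4 (d w1 w) - c) * B w) = (omega4 1 - c) * T1"
    using dist_in_local_graph[OF z w1] adj_irrefl unfolding T1_def N1_def sum_distrib_left
    by (intro sum.cong) auto
  moreover have "(\<Sum>w\<in>N2. (omega4 (d w1 w) - c) * B w) = (omega4 2 - c) * T2"
    using dist_in_local_graph[OF z w1] unfolding T2_def N2_def sum_distrib_left
    by (intro sum.cong) auto
  ultimately have "(omega4 0 - c) * B w1 + (omega4 1 - c) * T1 + (omega4 2 - c) * T2 = 0"
    unfolding split using dist_self w1 by simp
  then have "(omega4 1 - omega4 2) * (T1 - P * B w1) = 0"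
    unfolding T2 omega4_def by (simp add: algebra_simps)
  moreover have "omega4 1 - omega4 2 \<noteq> 0"
    using PQS_bounds unfolding omega4_def by (simp add: algebra_simps)
  ultimately have T1: "T1 = P * B w1" by simp
  have "T1 = (if Adj w1 w2 then Q else 0) + real (card {w\<in>N1. Adj w w2}) - real (card N1) / Q"
  proof -
    have "T1 = (\<Sum>w\<in>N1. (if w = w2 then Q else 0) + (if Adj w w2 then 1 else 0) - 1 / Q)"
      unfolding T1_def using B adj_irrefl by (intro sum.cong) (auto simp: N1_def)
    also have "\<dots> = (if Adj w1 w2 then Q else 0) + real (card {w\<in>N1. Adj w w2}) - real (card N1) / Q"
      using finite_X w2 by (simp add: sum.distrib sum_subtractf N1_def sum.If_cases Int_def conj_commute)
    finally show ?thesis .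
  qed
  moreover have "{w\<in>N1. Adj w w2} = {w\<in>nbr z. Adj w1 w \<and> Adj w w2}" unfolding N1_def by auto
  ultimately have Nc: "real (card {w\<in>nbr z. Adj w1 w \<and> Adj w w2}) =
      P * B w1 - (if Adj w1 w2 then Q else 0) + P * (Q + 1) / Q"
    using T1 card_N1 by simp
  consider "w1 = w2" | "w1 \<noteq> w2" "Adj w1 w2" | "w1 \<noteq> w2" "\<not> Adj w1 w2" by blast
  then show ?thesis
    using Nc[unfolded B[OF w1]] Q0 adj_irrefl by cases (simp_all, simp_all add: field_simps)
qed

lemma sphere_3_eq_nbr_antipode: assumes x: "x \<in> X" shows "sphere x 3 = nbr (antipode x)"
proof -
  have "d x t = 3 \<longleftrightarrow> Adj (antipode x) t" if "t \<in> X" for t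
    using dist_antipode[OF x that] dist_eq_1_iff[OF that antipode(1)[OF x]] adj_sym by auto
  then show ?thesis by auto
qed

lemma T_module_non_neighbour_sums_vanish:
  assumes x: "x \<in> X" and W: "T_module X Adj x W"
    and near: "\<And>w y. w \<in> W \<Longrightarrow> y \<in> X \<Longrightarrow> d x y \<le> 1 \<Longrightarrow> w y = 0"
    and w: "w \<in> W" and v: "v \<in> nbr (antipode x)"
  shows "(\<Sum>t\<in>{t\<in>nbr (antipode x). t \<noteq> v \<and> \<not> Adj v t}. w t) = 0"
proof -
  define z where "z = antipode x"
  define y where "y = antipode v"
  have z: "z \<in> X" using antipode[OF x] unfolding z_def by simp
  have vX: "v \<in> X" and v3: "d x v = 3" using v sphere_3_eq_nbr_antipode[OF x] by auto
  have y: "y \<in> X" "d x y = 1"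
    using antipode[OF vX] dist_antipode[OF vX x] v3 dist_commute[OF vX x] unfolding y_def by auto
  have "mat_vec X (adj_mat X Adj) (mat_vec X (adj_mat X Adj) (mat_vec X (dual_idem X Adj x 3) w)) \<in> W"
    by (intro T_module_adj_mat[OF W] T_module_dual_idem[OF W _ w]) simp
  from near[OF this y(1)] have "of_nat (ci 2) * (\<Sum>t\<in>{t\<in>sphere x 3. d y t = 2}. w t) = 0"
    using y(2) adj_adj_dual_idem[OF x y(1), of 3 w] by simp
  moreover have "ci 2 \<noteq> 0" using c_pos[of 2] by (simp add: ci_def)
  moreover have "{t\<in>sphere x 3. d y t = 2} = {t\<in>nbr z. t \<noteq> v \<and> \<not> Adj v t}"
  proof -
    have "d y t = 2 \<longleftrightarrow> t \<noteq> v \<and> \<not> Adj v t" if "t \<in> nbr z" for t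
      using dist_antipode[OF vX, of t] dist_commute[OF y(1), of t] dist_in_local_graph[OF z, of v t] v that
      unfolding y_def z_def by (auto split: if_splits)
    then show ?thesis using sphere_3_eq_nbr_antipode[OF x] unfolding z_def by auto
  qed
  ultimately show ?thesis unfolding z_def by simp
qed

lemma T_module_vanishes_on_sphere_3:
  assumes x: "x \<in> X" and W: "T_module X Adj x W"
    and near: "\<And>w y. w \<in> W \<Longrightarrow> y \<in> X \<Longrightarrow> d x y \<le> 1 \<Longrightarrow> w y = 0"
    and w: "w \<in> W" and t: "t \<in> X" "d x t = 3"
  shows "w t = 0"
proof (rule complement_sums_vanish[where R = Adj])
  define z where "z = antipode x"
  have z: "z \<in> X" using antipode[OF x] unfolding z_def by simp
  have common: "of_nat (card {u\<in>nbr z. Adj v u \<and> Adj u r}) =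
      (if v = r then complex_of_real (P * (Q + 1)) else if Adj v r then of_real (2 * P - Q) else of_real P)"
    if "v \<in> nbr z" "r \<in> nbr z" for v r
  proof -
    have "(of_nat (card {u\<in>nbr z. Adj v u \<and> Adj u r}) :: complex) =
        of_real (real (card {u\<in>nbr z. Adj v u \<and> Adj u r}))"
      by (rule of_real_of_nat_eq[symmetric])
    also have "\<dots> = of_real (if v = r then P * (Q + 1) else if Adj v r then 2 * P - Q else P)"
      by (simp only: local_common_neighbours[OF z that])
    finally show ?thesis by simp
  qed
  show "finite (nbr (antipode x))" using finite_X by simp
  show "\<not> Adj v v" for v by (rule adj_irrefl)
  show "of_nat (card {u\<in>nbr (antipode x). Adj v u}) = complex_of_real (P * (Q + 1))"
    if "v \<in> nbr (antipode x)" for v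
    using common[of v v] that adj_sym unfolding z_def by (simp cong: conj_cong)
  show "of_nat (card {u\<in>nbr (antipode x). Adj v u \<and> Adj u r}) =
      (if v = r then complex_of_real (P * (Q + 1)) else if Adj v r then of_real (2 * P - Q) else of_real P)"
    if "v \<in> nbr (antipode x)" "r \<in> nbr (antipode x)" for v r
    using common that unfolding z_def by blast
  have "P * (Q + 1) \<noteq> 0" using PQS_bounds by simp
  then show "complex_of_real (P * (Q + 1)) \<noteq> 0" by (simp only: of_real_eq_0_iff not_False_eq_True)
  have "P * (Q + 1) - (2 * P - Q + 1) = (P + 1) * (Q - 1)" by (simp add: algebra_simps)
  then have "P * (Q + 1) \<noteq> 2 * P - Q + 1" using PQS_bounds by auto
  then show "complex_of_real (P * (Q + 1)) \<noteq> of_real (2 * P - Q) + 1"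
    by (metis of_real_1 of_real_add of_real_eq_iff)
  show "(\<Sum>u\<in>{u\<in>nbr (antipode x). u \<noteq> v \<and> \<not> Adj v u}. w u) = 0" if "v \<in> nbr (antipode x)" for v
    by (rule T_module_non_neighbour_sums_vanish[OF x W _ w that], rule near)
  show "t \<in> nbr (antipode x)" using t sphere_3_eq_nbr_antipode[OF x] by auto
qed

end

theorem lemma8p3:
  fixes X :: "'a set" and Adj :: "'a \<Rightarrow> 'a \<Rightarrow> bool" and p q :: nat
    and x :: 'a and W :: "('a \<Rightarrow> complex) set"
  assumes "AT4 X Adj p q"
    and "x \<in> X"
    and "irreducible_T_module X Adj x W"
    and "endpoint X Adj x W = 2"
  shows "module_diameter X Adj x W = 0 \<and> thin X Adj x W"
proof -
  obtain b c where "at4 X Adj b c p q"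
    using assms(1) unfolding AT4_def at4_def at4_axioms_def antipodal_drg_def antipodal_drg_axioms_def drg_def
    by blast
  then interpret at4 X Adj b c p q .
  have x: "x \<in> X" by (rule assms(2))
  have W: "T_module X Adj x W" using assms(3) unfolding irreducible_T_module_def by simp
  have near: "w y = 0" if "w \<in> W" "y \<in> X" "d x y \<le> 1" for w y
  proof (rule ccontr)
    assume "w y \<noteq> 0"
    then have "d x y \<in> support_idx X Adj x W"
      unfolding mem_support_idx_iff[OF finite_X W] using that(1,2) dist_le_diam[OF x that(2)] by blast
    moreover have "finite (support_idx X Adj x W)" unfolding support_idx_def by simp
    ultimately have "2 \<le> d x y"
      using Min_le assms(4) unfolding endpoint_def by metis
    then show False using that(3) by simp
  qed
  have sphere_3: "w t = 0" if "w \<in> W" "t \<in> X" "d x t = 3" for w t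
    using T_module_vanishes_on_sphere_3[OF x W _ that] near by blast
  have antipode: "w (antipode x) = 0" if "w \<in> W" for w
  proof (rule T_module_vanishes_at_antipode[OF _ _ x W _ that])
    show "w' t = 0" if "w' \<in> W" "t \<in> X" "d x t = 4 - 1" for w' t
      using sphere_3 that by simp
  qed simp_all
  have "d x y = 2" if w: "w \<in> W" "w y \<noteq> 0" for w y
  proof -
    have y: "y \<in> X" using T_module_vanishes_outside[OF W w(1)] w(2) by blast
    consider "d x y \<le> 1" | "d x y = 2" | "d x y = 3" | "d x y = 4"
      using dist_le_diam[OF x y] by linarith
    then show ?thesis
    proof cases
      case 4
      then show ?thesis using antipode[OF w(1)] antipode_unique[OF x y] w(2) by simp
    qed (use near sphere_3 w y in blast)+
  qed
  then show ?thesis by (rule irreducible_T_module_on_sphere[OF finite_X assms(3)])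
qed

end
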